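(* Let $x\in\mathbb{R}^N$, $\eta_x>0$, and let $\phi:\mathbb{R}^N\to\mathbb{R}$ satisfy hypothesis (H) at $x$ with radius $\eta_x$, with $p_x\neq0$. Then for every $\epsilon\in(0,\eta_x)$: $$\big|\mathcal{L}_s^\epsilon[\phi](x)-\mathcal{L}_s[\phi](x)\big|\le 4c_s s\,C_x\big(\eta_x^{2-2s}-\epsilon^{2-2s}\big)A_\epsilon+c_s(1-s)\Big(\eta_x^{-2s}+\frac{2s}{2s-1}\eta_x^{1-2s}\Big)\omega_\phi(A_\epsilon)+c_s s\,C_x\epsilon^{2-2s}.$$
   Context: Fix $N\ge1$ and $s\in(\frac12,1)$. Let $C_s=\frac{4^s s\,\Gamma(\frac12+s)}{\pi^{1/2}\Gamma(1-s)}$ and $c_s=\frac{C_s}{s(1-s)}$. Let $\mu_s$ be the Borel measure on $(0,\infty)$ with $\mathrm{d}\mu_s(t)=C_s t^{-1-2s}\,\mathrm{d}t$. For $\phi:\mathbb{R}^N\to\mathbb{R}$ and $x,y,\tilde y\in\mathbb{R}^N$ let $L_\phi(x,y,\tilde y)=\phi(x+y)+\phi(x-\tilde y)-2\phi(x)$. For $\epsilon>0$ define $$\mathcal{L}_s^\epsilon[\phi](x)=\sup_{|y|=1}\inf_{|\tilde y|=1}\int_\epsilon^\infty L_\phi(x,ty,t\tilde y)\,\mathrm{d}\mu_s(t),\qquad \mathcal{L}_s[\phi](x)=\sup_{|y|=1}\inf_{|\tilde y|=1}\int_0^\infty L_\phi(x,ty,t\tilde y)\,\mathrm{d}\mu_s(t),$$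 where $\int_0^\infty$ means $\lim_{\delta\to0^+}\int_\delta^\infty$ (a value in $[-\infty,\infty]$). Hypothesis (H) at $x$ with radius $\eta_x>0$: $\phi:\mathbb{R}^N\to\mathbb{R}$ is bounded and Borel; (i) $\phi\in C^2(\bar B_{\eta_x}(x))$, and we set $p_x=\nabla\phi(x)$, $C_x=\frac12\|\nabla^2\phi\|_{L^\infty(B_{\eta_x}(x))}$; (ii) $\phi$ is bounded and uniformly continuous on $\mathbb{R}^N\setminus\bar B_{\eta_x}(x)$, with modulus $\omega_\phi(a)=\sup\{|\phi(z)-\phi(w)|: z,w\in\mathbb{R}^N\setminus\bar B_{\eta_x}(x),\ |z-w|\le a\}$. When $p_x\ne0$ and $0<\epsilon<\eta_x$ define $$\kappa_\epsilon=\sup\Big\{a\in[0,2]:\ a^2\le\frac{8\omega_\phi(a)}{|p_x|}\cdot\frac{\frac{2s-1}{2s}\eta_x^{-2s}+\eta_x^{1-2s}}{\epsilon^{1-2s}-\eta_x^{1-2s}}\Big\},\quad A_\epsilon=\max\Big\{\frac{16C_x}{|p_x|}\cdot\frac{2s-1}{1-s}\cdot\frac{\eta_x^{2-2s}-\epsilon^{2-2s}}{\epsilon^{1-2s}-\eta_x^{1-2s}},\ \kappa_\epsilon\Big\}.$$ *)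

theory Defs
  imports "HOL-Analysis.Analysis"
begin

definition Cs :: "real \<Rightarrow> real" where
  "Cs s = (4 powr s) * s * Gamma (1/2 + s) / (sqrt pi * Gamma (1 - s))"

definition cs :: "real \<Rightarrow> real" where
  "cs s = Cs s / (s * (1 - s))"

text \<open>The measure mu_s on (0,infinity), as a measure on the real line with density
  C_s t^(-1-2s) on (0,infinity) and zero elsewhere.\<close>
definition mu_s :: "real \<Rightarrow> real measure" where
  "mu_s s = density lborel (\<lambda>t. ennreal (if 0 < t then Cs s * (t powr (- 1 - 2 * s)) else 0))"

definition Lphi :: "('a::real_normed_vector \<Rightarrow> real) \<Rightarrow> 'a \<Rightarrow> 'a \<Rightarrow> 'a \<Rightarrow> real" where
  "Lphi \<phi> x y y' = \<phi> (x + y) + \<phi> (x - y') - 2 * \<phi> x"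

definition trunc_int :: "real \<Rightarrow> ('a::real_normed_vector \<Rightarrow> real) \<Rightarrow> 'a \<Rightarrow> 'a \<Rightarrow> 'a \<Rightarrow> real \<Rightarrow> real" where
  "trunc_int s \<phi> x y y' eps = (LINT t:{eps..}|mu_s s. Lphi \<phi> x (t *\<^sub>R y) (t *\<^sub>R y'))"

definition full_int :: "real \<Rightarrow> ('a::real_normed_vector \<Rightarrow> real) \<Rightarrow> 'a \<Rightarrow> 'a \<Rightarrow> 'a \<Rightarrow> ereal" where
  "full_int s \<phi> x y y' = Lim (at_right 0) (\<lambda>\<delta>. ereal (trunc_int s \<phi> x y y' \<delta>))"

definition Leps :: "real \<Rightarrow> real \<Rightarrow> ('a::real_normed_vector \<Rightarrow> real) \<Rightarrow> 'a \<Rightarrow> ereal" where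
  "Leps s eps \<phi> x = (SUP y\<in>sphere 0 1. INF y'\<in>sphere 0 1. ereal (trunc_int s \<phi> x y y' eps))"

definition Lfull :: "real \<Rightarrow> ('a::real_normed_vector \<Rightarrow> real) \<Rightarrow> 'a \<Rightarrow> ereal" where
  "Lfull s \<phi> x = (SUP y\<in>sphere 0 1. INF y'\<in>sphere 0 1. full_int s \<phi> x y y')"

definition omega_phi :: "('a::real_normed_vector \<Rightarrow> real) \<Rightarrow> 'a \<Rightarrow> real \<Rightarrow> real \<Rightarrow> real" where
  "omega_phi \<phi> x \<eta> a = Sup {\<bar>\<phi> z - \<phi> w\<bar> | z w. z \<notin> cball x \<eta> \<and> w \<notin> cball x \<eta> \<and> dist z w \<le> a}"

definition kappa_eps :: "real \<Rightarrow> ('a::real_normed_vector \<Rightarrow> real) \<Rightarrow> 'a \<Rightarrow> real \<Rightarrow> 'a \<Rightarrow> real \<Rightarrow> real" where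
  "kappa_eps s \<phi> x \<eta> p eps = Sup {a \<in> {0..2}. a\<^sup>2 \<le> 8 * omega_phi \<phi> x \<eta> a / norm p *
      (((2 * s - 1) / (2 * s)) * \<eta> powr (-2 * s) + \<eta> powr (1 - 2 * s)) / (eps powr (1 - 2 * s) - \<eta> powr (1 - 2 * s))}"

definition A_eps :: "real \<Rightarrow> ('a::real_normed_vector \<Rightarrow> real) \<Rightarrow> 'a \<Rightarrow> real \<Rightarrow> 'a \<Rightarrow> real \<Rightarrow> real \<Rightarrow> real" where
  "A_eps s \<phi> x \<eta> p Cx eps = max (16 * Cx / norm p * ((2 * s - 1) / (1 - s)) *
      ((\<eta> powr (2 - 2 * s) - eps powr (2 - 2 * s)) / (eps powr (1 - 2 * s) - \<eta> powr (1 - 2 * s))))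
      (kappa_eps s \<phi> x \<eta> p eps)"

end

theory Submission
  imports Defs
begin

text \<open>Let \<open>p = \<nabla>\<phi>(x) \<noteq> 0\<close> and \<open>u = p / |p|\<close>. Because \<open>2 s > 1\<close>, the first moment
  \<open>\<integral> t d\<mu>\<^sub>s\<close> diverges at \<open>0\<close>. Replacing a direction \<open>w\<close> by \<open>v\<close> changes the one-sided ray
  integral \<open>\<integral>\<^sub>\<delta>\<^sup>\<infinity> (\<phi>(x + t v) - \<phi>(x)) d\<mu>\<^sub>s\<close> by \<open>p \<bullet> (v - w) \<integral> t d\<mu>\<^sub>s\<close> up to a
  \<open>C\<^sub>x |v - w| \<integral> t\<^sup>2 d\<mu>\<^sub>s\<close> error near \<open>x\<close> and a \<open>\<omega>\<^sub>\<phi>(|v - w|) \<integral> (1 + t) d\<mu>\<^sub>s\<close> error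
  beyond \<open>\<eta>\<close>. When \<open>v = u\<close> or \<open>w = -u\<close>, \<open>p \<bullet> (v - w) = |p| |v - w|\<^sup>2 / 2 \<ge> 0\<close>.

  Untruncated, this makes \<open>(u, u)\<close> a saddle point of the sup-inf: leaving \<open>u\<close> in the first slot
  gives \<open>-\<infinity>\<close>, in the second \<open>+\<infinity>\<close>. So \<open>L\<^sub>s[\<phi>](x)\<close> is the limit of the symmetric
  integrals, which differ from the one truncated at \<open>\<epsilon>\<close> by \<open>c\<^sub>s s C\<^sub>x \<epsilon>^(2 - 2 s)\<close> since the
  symmetric second difference is \<open>O(C\<^sub>x t\<^sup>2)\<close>. Truncated at \<open>\<epsilon>\<close>, leaving \<open>u\<close> in either slot
  gains at most \<open>B\<^sub>\<epsilon>\<close> (the first two terms of the bound): for \<open>|v - w| \<le> A\<^sub>\<epsilon>\<close> the errors are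
  bounded by their values at \<open>A\<^sub>\<epsilon>\<close>, and beyond \<open>A\<^sub>\<epsilon>\<close> the drift term dominates them. In
  dimension one the sphere is \<open>{u, -u}\<close> and the sup-inf is exactly the symmetric integral.\<close>

section \<open>The measure \<open>\<mu>\<^sub>s\<close>\<close>

lemma Cs_pos: assumes "1/2 < s" "s < 1" shows "0 < Cs s"
  unfolding Cs_def using assms by (intro divide_pos_pos mult_pos_pos Gamma_real_pos) auto

lemma sets_mu_s [simp, measurable_cong]: "sets (mu_s s) = sets borel"
  by (simp add: mu_s_def)

lemma emeasure_mu_s_singleton: "emeasure (mu_s s) {a} = 0"
  unfolding mu_s_def by (subst emeasure_density) (auto intro: nn_integral_null_set)

lemma mu_s_set_integral_lborel:
  fixes f :: "real \<Rightarrow> real"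
  assumes "0 \<le> Cs s" and S: "S \<in> sets borel" "S \<subseteq> {0<..}" and f[measurable]: "f \<in> borel_measurable borel"
  shows "set_integrable (mu_s s) S f \<longleftrightarrow> set_integrable lborel S (\<lambda>t. Cs s * t powr (- 1 - 2 * s) * f t)"
    and "(LINT t:S|mu_s s. f t) = (LINT t:S|lborel. Cs s * t powr (- 1 - 2 * s) * f t)"
proof -
  let ?g = "\<lambda>t::real. if 0 < t then Cs s * (t powr (- 1 - 2 * s)) else 0"
  have gm[measurable]: "?g \<in> borel_measurable lborel" by measurable
  have gnn: "AE t in lborel. 0 \<le> ?g t" using assms(1) by auto
  have Sm[measurable]: "S \<in> sets lborel" using S by simp
  have eq: "(\<lambda>t. ?g t * (indicator S t * f t)) = (\<lambda>t. indicator S t * (Cs s * t powr (- 1 - 2 * s) * f t))"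
    using S by (intro ext) (auto simp: indicator_def)
  show "set_integrable (mu_s s) S f \<longleftrightarrow> set_integrable lborel S (\<lambda>t. Cs s * t powr (- 1 - 2 * s) * f t)"
    unfolding set_integrable_def mu_s_def
    by (subst integrable_density[OF _ gm gnn]) (simp_all add: eq)
  show "(LINT t:S|mu_s s. f t) = (LINT t:S|lborel. Cs s * t powr (- 1 - 2 * s) * f t)"
    unfolding set_lebesgue_integral_def mu_s_def
    by (subst integral_density[OF _ gm gnn]) (simp_all add: eq)
qed

lemma mu_s_set_integral_greaterThan:
  fixes f :: "real \<Rightarrow> real"
  assumes [measurable]: "f \<in> borel_measurable borel"
  shows "set_integrable (mu_s s) {a<..} f \<longleftrightarrow> set_integrable (mu_s s) {a..} f"
    and "(LINT t:{a<..}|mu_s s. f t) = (LINT t:{a..}|mu_s s. f t)"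
proof -
  have X: "({a<..} - {a..}) \<union> ({a..} - {a<..}) \<subseteq> {a}" by auto
  show "set_integrable (mu_s s) {a<..} f \<longleftrightarrow> set_integrable (mu_s s) {a..} f"
    by (rule set_integrable_discrete_difference[OF _ X]) (auto simp: emeasure_mu_s_singleton)
  show "(LINT t:{a<..}|mu_s s. f t) = (LINT t:{a..}|mu_s s. f t)"
    by (rule set_integral_discrete_difference[OF _ X]) (auto simp: emeasure_mu_s_singleton)
qed

lemma powr_kernel_mult: "t powr (- 1 - 2 * s) * t powr e = t powr (e - 2 * s - 1)" for t :: real
proof -
  have "t powr (e - 2 * s - 1) = t powr ((- 1 - 2 * s) + e)" by (rule arg_cong[where f="\<lambda>u. t powr u"]) simp
  then show ?thesis by (simp only: powr_add)
qed

lemma mu_s_integral_powr_atLeastAtMost: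
  assumes s: "1/2 < s" "s < 1" and ab: "0 < a" "a \<le> b" and e: "e \<noteq> 2 * s"
  shows "set_integrable (mu_s s) {a..b} (\<lambda>t. t powr e)"
    and "(LINT t:{a..b}|mu_s s. t powr e) = Cs s * (b powr (e - 2 * s) - a powr (e - 2 * s)) / (e - 2 * s)"
proof -
  have C: "0 \<le> Cs s" using Cs_pos[OF s] by simp
  have S: "{a..b} \<subseteq> {0<..}" using ab by auto
  have cont: "continuous_on {a..b} (\<lambda>t. Cs s * t powr (- 1 - 2 * s) * t powr e)"
    using ab by (intro continuous_intros) auto
  note X = mu_s_set_integral_lborel[OF C _ S, of "\<lambda>t. t powr e"]
  show "set_integrable (mu_s s) {a..b} (\<lambda>t. t powr e)"
    using X(1) borel_integrable_atLeastAtMost'[OF cont] by simp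
  have "(LINT t:{a..b}|lborel. Cs s * t powr (- 1 - 2 * s) * t powr e)
      = Cs s * b powr (e - 2 * s) / (e - 2 * s) - Cs s * a powr (e - 2 * s) / (e - 2 * s)"
    unfolding set_lebesgue_integral_def
  proof (rule integral_FTC_atLeastAtMost[OF ab(2) _ cont])
    fix t assume t: "a \<le> t" "t \<le> b"
    then have tp: "0 < t" using ab by simp
    have "((\<lambda>t. Cs s * t powr (e - 2 * s) / (e - 2 * s)) has_real_derivative
       Cs s * ((e - 2 * s) * t powr (e - 2 * s - 1)) / (e - 2 * s)) (at t)"
      using tp by (auto intro!: derivative_eq_intros)
    moreover have "Cs s * ((e - 2 * s) * t powr (e - 2 * s - 1)) / (e - 2 * s)
        = Cs s * t powr (- 1 - 2 * s) * t powr e"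
    proof -
      have "t powr (- 1 - 2 * s) * t powr e = t powr (e - 2 * s - 1)" by (rule powr_kernel_mult)
      moreover have "e - 2 * s \<noteq> 0" using e by simp
      ultimately show ?thesis by (simp add: field_simps)
    qed
    ultimately show "((\<lambda>t. Cs s * t powr (e - 2 * s) / (e - 2 * s)) has_vector_derivative
       Cs s * t powr (- 1 - 2 * s) * t powr e) (at t within {a..b})"
      by (simp add: has_real_derivative_iff_has_vector_derivative[symmetric] has_field_derivative_at_within)
  qed
  then show "(LINT t:{a..b}|mu_s s. t powr e) = Cs s * (b powr (e - 2 * s) - a powr (e - 2 * s)) / (e - 2 * s)"
    using X(2) by (simp add: diff_divide_distrib right_diff_distrib)
qed

lemma mu_s_integral_powr_atLeast:
  assumes s: "1/2 < s" "s < 1" and a: "0 < a" and e: "e < 2 * s"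
  shows "set_integrable (mu_s s) {a..} (\<lambda>t. t powr e)"
    and "(LINT t:{a..}|mu_s s. t powr e) = Cs s * a powr (e - 2 * s) / (2 * s - e)"
proof -
  have C: "0 \<le> Cs s" using Cs_pos[OF s] by simp
  have S: "{a..} \<subseteq> {0<..}" using a by auto
  note X = mu_s_set_integral_lborel[OF C _ S, of "\<lambda>t. t powr e"]
  let ?f = "\<lambda>t. Cs s * t powr (- 1 - 2 * s) * t powr e"
  have "((\<lambda>t. t powr (e - 2 * s - 1)) has_integral -(a powr (e - 2 * s - 1 + 1)) / (e - 2 * s - 1 + 1)) {a..}"
    by (rule has_integral_powr_to_inf) (use e a in auto)
  then have "((\<lambda>t. Cs s * t powr (e - 2 * s - 1)) has_integral Cs s * (-(a powr (e - 2 * s - 1 + 1)) / (e - 2 * s - 1 + 1))) {a..}"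
    by (rule has_integral_mult_right)
  then have "(?f has_integral Cs s * (-(a powr (e - 2 * s - 1 + 1)) / (e - 2 * s - 1 + 1))) {a..}"
    by (rule has_integral_eq[rotated]) (use a in \<open>auto simp: powr_kernel_mult mult.assoc\<close>)
  moreover have "Cs s * (-(a powr (e - 2 * s - 1 + 1)) / (e - 2 * s - 1 + 1)) = Cs s * a powr (e - 2 * s) / (2 * s - e)"
    using e by (simp add: field_simps)
  ultimately have hi: "(?f has_integral Cs s * a powr (e - 2 * s) / (2 * s - e)) {a..}" by simp
  have "?f absolutely_integrable_on {a..}"
    using hi C a by (intro nonnegative_absolutely_integrable_1) (auto simp: integrable_on_def)
  then have li: "set_integrable lborel {a..} ?f"
    unfolding set_integrable_def by (subst (asm) integrable_completion) auto
  show "set_integrable (mu_s s) {a..} (\<lambda>t. t powr e)" using X(1) li by simp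
  show "(LINT t:{a..}|mu_s s. t powr e) = Cs s * a powr (e - 2 * s) / (2 * s - e)"
    using X(2) set_borel_integral_eq_integral(2)[OF li] integral_unique[OF hi] by simp
qed

lemma set_integrable_mu_s_powr_greaterThanAtMost:
  assumes s: "1/2 < s" "s < 1" and b: "0 < b" and e: "2 * s < e"
  shows "set_integrable (mu_s s) {0<..b} (\<lambda>t. t powr e)"
proof -
  have C: "0 \<le> Cs s" using Cs_pos[OF s] by simp
  have S: "{0<..b} \<subseteq> {0::real<..}" by auto
  note X = mu_s_set_integral_lborel[OF C _ S, of "\<lambda>t. t powr e"]
  let ?f = "\<lambda>t. Cs s * t powr (- 1 - 2 * s) * t powr e"
  have "((\<lambda>t. t powr (e - 2 * s - 1)) has_integral (b powr (e - 2 * s - 1 + 1) / (e - 2 * s - 1 + 1))) {0..b}"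
    by (rule has_integral_powr_from_0) (use e b in auto)
  then have "((\<lambda>t. Cs s * t powr (e - 2 * s - 1)) has_integral Cs s * (b powr (e - 2 * s - 1 + 1) / (e - 2 * s - 1 + 1))) {0..b}"
    by (rule has_integral_mult_right)
  then have hi: "(?f has_integral Cs s * (b powr (e - 2 * s - 1 + 1) / (e - 2 * s - 1 + 1))) {0..b}"
    by (rule has_integral_eq[rotated]) (auto simp: powr_kernel_mult mult.assoc)
  have "?f absolutely_integrable_on {0..b}"
    using hi C by (intro nonnegative_absolutely_integrable_1) (auto simp: integrable_on_def)
  then have "set_integrable lborel {0..b} ?f"
    unfolding set_integrable_def by (subst (asm) integrable_completion) auto
  then have "set_integrable lborel {0<..b} ?f"
    by (rule set_integrable_subset) auto
  then show ?thesis using X(1) by simp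
qed

lemma set_integrable_mu_s_bounded:
  fixes f :: "real \<Rightarrow> real"
  assumes s: "1/2 < s" "s < 1" and a: "0 < a" and f[measurable]: "f \<in> borel_measurable borel"
    and B: "\<And>t. \<bar>f t\<bar> \<le> B"
  shows "set_integrable (mu_s s) {a..} f"
proof (rule set_integrable_bound)
  show "set_integrable (mu_s s) {a..} (\<lambda>t. B * t powr 0)"
    using mu_s_integral_powr_atLeast(1)[OF s a, of 0] s by auto
  show "set_borel_measurable (mu_s s) {a..} f"
    unfolding set_borel_measurable_def by measurable
  show "AE t in mu_s s. t \<in> {a..} \<longrightarrow> norm (f t) \<le> norm (B * t powr 0)"
    using a B by (intro AE_I2) (auto, smt (verit) B)
qed

lemma mu_s_first_moment_tendsto_at_top:
  assumes s: "1/2 < s" "s < 1" and r: "0 < r"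
  shows "filterlim (\<lambda>d. LINT t:{d..r}|mu_s s. t powr 1) at_top (at_right 0)"
proof -
  define c where "c = Cs s / (2 * s - 1)"
  have c: "0 < c" using Cs_pos[OF s] s by (simp add: c_def)
  have "filterlim (\<lambda>d. - c * r powr (1 - 2 * s) + c * d powr (1 - 2 * s)) at_top (at_right 0)"
  proof (intro filterlim_tendsto_add_at_top[OF tendsto_const]
      filterlim_tendsto_pos_mult_at_top[OF tendsto_const c])
    show "filterlim (\<lambda>d. d powr (1 - 2 * s)) at_top (at_right 0)" using s by real_asymp
  qed
  moreover have "eventually (\<lambda>d. - c * r powr (1 - 2 * s) + c * d powr (1 - 2 * s)
      = (LINT t:{d..r}|mu_s s. t powr 1)) (at_right 0)"
    using eventually_at_right_real[OF r]
  proof eventually_elim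
    case (elim d)
    have e: "1 \<noteq> 2 * s" using s by auto
    have "(LINT t:{d..r}|mu_s s. t powr 1) = Cs s * (r powr (1 - 2 * s) - d powr (1 - 2 * s)) / (1 - 2 * s)"
      using mu_s_integral_powr_atLeastAtMost(2)[OF s _ _ e, of d r] elim by simp
    also have "\<dots> = Cs s * (d powr (1 - 2 * s) - r powr (1 - 2 * s)) / (2 * s - 1)"
      by (metis minus_diff_eq minus_divide_divide mult_minus_right)
    also have "\<dots> = - c * r powr (1 - 2 * s) + c * d powr (1 - 2 * s)"
      by (simp add: c_def algebra_simps diff_divide_distrib)
    finally show ?case by simp
  qed
  ultimately show ?thesis by (rule filterlim_cong[OF refl refl, THEN iffD1, rotated])
qed

section \<open>Unit vectors and the modulus of continuity\<close>

lemma half_le_sin: assumes "0 \<le> y" "y \<le> pi/2" shows "y / 2 \<le> sin y"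
proof (cases "y \<le> pi/3")
  case True
  have "(\<lambda>y. sin y - y/2) 0 \<le> (\<lambda>y. sin y - y/2) y"
  proof (rule DERIV_nonneg_imp_nondecreasing[OF assms(1)])
    fix z assume z: "0 \<le> z" "z \<le> y"
    show "\<exists>d. ((\<lambda>y. sin y - y/2) has_real_derivative d) (at z) \<and> 0 \<le> d"
    proof (intro exI conjI)
      show "((\<lambda>y. sin y - y/2) has_real_derivative cos z - 1/2) (at z)"
        by (auto intro!: derivative_eq_intros)
      have "cos (pi/3) \<le> cos z" using z True by (intro cos_monotone_0_pi_le) auto
      then show "0 \<le> cos z - 1/2" by (simp add: cos_60)
    qed
  qed
  then show ?thesis by simp
next
  case False
  have "sin (pi/3) \<le> sin y" using False assms by (intro sin_monotone_2pi_le) auto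
  moreover have "y/2 \<le> sqrt 3 / 2"
  proof -
    have "1.7 \<le> sqrt 3" by (rule real_le_rsqrt) (simp add: power2_eq_square)
    then show ?thesis using assms pi_approx by simp
  qed
  ultimately show ?thesis by (simp add: sin_60)
qed

lemma chord_cos_sin: "(cos A - cos B)\<^sup>2 + (sin A - sin B)\<^sup>2 = 4 * (sin ((A - B)/2))\<^sup>2" for A B :: real
proof -
  have "(cos A - cos B)\<^sup>2 + (sin A - sin B)\<^sup>2 = 2 - 2 * (cos A * cos B + sin A * sin B)"
    by (simp add: power2_diff algebra_simps)
  also have "\<dots> = 2 - 2 * cos (A - B)" by (simp add: cos_diff)
  also have "\<dots> = 2 - 2 * cos (2 * ((A - B)/2))"
    by (metis mult_2 add_divide_distrib[symmetric] field_sum_of_halves)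
  also have "\<dots> = 4 * (sin ((A - B)/2))\<^sup>2" by (subst cos_double_sin) (simp add: algebra_simps)
  finally show ?thesis .
qed

lemma power2_norm_orthonormal_comb:
  fixes v e :: "'a::real_inner"
  assumes "norm v = 1" "norm e = 1" "e \<bullet> v = 0"
  shows "(norm (a *\<^sub>R v + b *\<^sub>R e))\<^sup>2 = a\<^sup>2 + b\<^sup>2"
proof -
  have "v \<bullet> v = 1" "e \<bullet> e = 1" "v \<bullet> e = 0" using assms by (simp_all add: norm_eq_1 inner_commute)
  then show ?thesis
    by (simp only: power2_norm_eq_inner) (simp add: inner_add_left inner_add_right inner_commute power2_eq_square)
qed

lemma exists_unit_orthogonal:
  assumes "DIM('a::euclidean_space) \<ge> 2"
  shows "\<exists>e::'a. norm e = 1 \<and> e \<bullet> v = 0"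
proof -
  have "\<not> card (Basis::'a set) \<le> Suc 0" using assms by simp
  then obtain b1 b2 :: 'a where b: "b1 \<in> Basis" "b2 \<in> Basis" "b1 \<noteq> b2"
    using card_le_Suc0_iff_eq[OF finite_Basis] by blast
  have bb: "b1 \<bullet> b1 = 1" "b2 \<bullet> b2 = 1" "b1 \<bullet> b2 = 0" "b2 \<bullet> b1 = 0"
    using b by (auto simp: inner_Basis)
  define e' where "e' = (v \<bullet> b2) *\<^sub>R b1 - (v \<bullet> b1) *\<^sub>R b2"
  have "b1 \<bullet> v = v \<bullet> b1" "b2 \<bullet> v = v \<bullet> b2" by (simp_all add: inner_commute)
  then have "e' \<bullet> v = 0" unfolding e'_def inner_diff_left inner_scaleR_left by simp
  show ?thesis
  proof (cases "e' = 0")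
    case False
    then show ?thesis using \<open>e' \<bullet> v = 0\<close> by (intro exI[of _ "e' /\<^sub>R norm e'"]) auto
  next
    case True
    have "v \<bullet> b2 = e' \<bullet> b1" "v \<bullet> b1 = - (e' \<bullet> b2)" using bb by (simp_all add: e'_def inner_diff_left)
    then have "v \<bullet> b1 = 0" using True by simp
    then show ?thesis using b by (intro exI[of _ b1]) (auto simp: inner_commute)
  qed
qed

lemma unit_vector_on_great_circle:
  fixes v1 v2 :: "'a::euclidean_space"
  assumes "DIM('a) \<ge> 2" "norm v1 = 1" "norm v2 = 1"
  shows "\<exists>e \<theta>. norm e = 1 \<and> e \<bullet> v1 = 0 \<and> 0 \<le> \<theta> \<and> \<theta> \<le> pi \<and> v2 = cos \<theta> *\<^sub>R v1 + sin \<theta> *\<^sub>R e"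
proof -
  define c where "c = v1 \<bullet> v2"
  have c1: "\<bar>c\<bar> \<le> 1" using Cauchy_Schwarz_ineq2[of v1 v2] assms by (simp add: c_def)
  define \<theta> where "\<theta> = arccos c"
  have th: "0 \<le> \<theta>" "\<theta> \<le> pi" "cos \<theta> = c" "sin \<theta> = sqrt (1 - c\<^sup>2)"
    using c1 by (auto simp: \<theta>_def arccos_lbound arccos_ubound cos_arccos sin_arccos)
  define w where "w = v2 - c *\<^sub>R v1"
  have vv: "v1 \<bullet> v1 = 1" "v2 \<bullet> v2 = 1" using assms by (simp_all add: norm_eq_1)
  have ww: "w \<bullet> w = 1 - c\<^sup>2"
    by (simp add: w_def inner_diff_left inner_diff_right vv c_def inner_commute power2_eq_square)
  have wv: "w \<bullet> v1 = 0" by (simp add: w_def inner_diff_left inner_diff_right vv c_def inner_commute)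
  show ?thesis
  proof (cases "w = 0")
    case False
    have nw: "norm w = sin \<theta>" using ww th by (simp add: norm_eq_sqrt_inner)
    have "sin \<theta> \<noteq> 0" using ww th False by (metis inner_eq_zero_iff real_sqrt_eq_zero_cancel_iff)
    then have "v2 = cos \<theta> *\<^sub>R v1 + sin \<theta> *\<^sub>R (w /\<^sub>R norm w)"
      using nw th(3) by (simp add: w_def)
    moreover have "norm (w /\<^sub>R norm w) = 1" "(w /\<^sub>R norm w) \<bullet> v1 = 0" using False wv by auto
    ultimately show ?thesis using th by blast
  next
    case True
    then have "sin \<theta> = 0" using ww th by simp
    moreover obtain e :: 'a where "norm e = 1" "e \<bullet> v1 = 0" using exists_unit_orthogonal[OF assms(1)] by blast
    ultimately show ?thesis using True th by (intro exI[of _ e] exI[of _ \<theta>]) (simp add: w_def)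
  qed
qed

lemma great_circle_dist_le:
  fixes v e :: "'a::real_inner"
  assumes "norm v = 1" "norm e = 1" "e \<bullet> v = 0" "0 \<le> \<theta>"
  shows "norm ((cos (l1 * \<theta>) *\<^sub>R v + sin (l1 * \<theta>) *\<^sub>R e) - (cos (l2 * \<theta>) *\<^sub>R v + sin (l2 * \<theta>) *\<^sub>R e))
    \<le> \<bar>l1 - l2\<bar> * \<theta>"
proof -
  have "(cos (l1 * \<theta>) *\<^sub>R v + sin (l1 * \<theta>) *\<^sub>R e) - (cos (l2 * \<theta>) *\<^sub>R v + sin (l2 * \<theta>) *\<^sub>R e)
      = (cos (l1 * \<theta>) - cos (l2 * \<theta>)) *\<^sub>R v + (sin (l1 * \<theta>) - sin (l2 * \<theta>)) *\<^sub>R e"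
    by (simp add: algebra_simps)
  then have "(norm ((cos (l1 * \<theta>) *\<^sub>R v + sin (l1 * \<theta>) *\<^sub>R e) - (cos (l2 * \<theta>) *\<^sub>R v + sin (l2 * \<theta>) *\<^sub>R e)))\<^sup>2
      = (cos (l1 * \<theta>) - cos (l2 * \<theta>))\<^sup>2 + (sin (l1 * \<theta>) - sin (l2 * \<theta>))\<^sup>2"
    using power2_norm_orthonormal_comb[OF assms(1-3)] by simp
  also have "\<dots> = 4 * (sin ((l1 * \<theta> - l2 * \<theta>)/2))\<^sup>2" by (rule chord_cos_sin)
  also have "\<dots> \<le> 4 * ((l1 * \<theta> - l2 * \<theta>)/2)\<^sup>2"
    by (intro mult_left_mono abs_le_square_iff[THEN iffD1, OF abs_sin_x_le_abs_x]) auto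
  also have "\<dots> = (\<bar>l1 - l2\<bar> * \<theta>)\<^sup>2" by (simp add: power_divide power_mult_distrib left_diff_distrib[symmetric])
  finally show ?thesis by (rule power2_le_imp_le) (use assms in simp)
qed

lemma norm_great_circle:
  fixes v e :: "'a::real_inner"
  assumes "norm v = 1" "norm e = 1" "e \<bullet> v = 0"
  shows "norm (cos \<alpha> *\<^sub>R v + sin \<alpha> *\<^sub>R e) = 1"
  using power2_norm_orthonormal_comb[OF assms, of "cos \<alpha>" "sin \<alpha>"]
  by simp (metis norm_ge_zero power2_eq_iff_nonneg power_one zero_le_one)

lemma great_circle_angle_le:
  fixes v e :: "'a::real_inner"
  assumes v: "norm v = 1" and e: "norm e = 1" "e \<bullet> v = 0" and th: "0 \<le> \<theta>" "\<theta> \<le> pi"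
  shows "\<theta> / 2 \<le> norm (v - (cos \<theta> *\<^sub>R v + sin \<theta> *\<^sub>R e))"
proof -
  define a where "a = norm (v - (cos \<theta> *\<^sub>R v + sin \<theta> *\<^sub>R e))"
  have eq: "v - (cos \<theta> *\<^sub>R v + sin \<theta> *\<^sub>R e) = (1 - cos \<theta>) *\<^sub>R v + (0 - sin \<theta>) *\<^sub>R e"
    by (simp add: algebra_simps)
  have "a\<^sup>2 = (cos 0 - cos \<theta>)\<^sup>2 + (sin 0 - sin \<theta>)\<^sup>2"
    unfolding a_def eq power2_norm_orthonormal_comb[OF v e] by simp
  also have "\<dots> = (2 * sin (\<theta>/2))\<^sup>2" by (subst chord_cos_sin) (simp add: power2_eq_square)
  finally have "a = 2 * sin (\<theta>/2)"
    using th by (subst (asm) power2_eq_iff_nonneg) (auto simp: a_def intro!: sin_ge_zero)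
  moreover have "\<theta>/2/2 \<le> sin (\<theta>/2)" using th by (intro half_le_sin) auto
  ultimately show ?thesis by (simp add: a_def)
qed

lemma omega_phi_set_bdd_above:
  fixes \<phi> :: "'a::real_normed_vector \<Rightarrow> real"
  assumes "bounded (range \<phi>)"
  shows "bdd_above {\<bar>\<phi> z - \<phi> w\<bar> | z w. z \<notin> cball x \<eta> \<and> w \<notin> cball x \<eta> \<and> dist z w \<le> a}"
proof -
  obtain B where B: "\<And>z. \<bar>\<phi> z\<bar> \<le> B" using assms by (auto simp: bounded_iff)
  show ?thesis
  proof (rule bdd_aboveI[of _ "2 * B"])
    fix y assume "y \<in> {\<bar>\<phi> z - \<phi> w\<bar> | z w. z \<notin> cball x \<eta> \<and> w \<notin> cball x \<eta> \<and> dist z w \<le> a}"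
    then obtain z w where "y = \<bar>\<phi> z - \<phi> w\<bar>" by blast
    then show "y \<le> 2 * B" using B[of z] B[of w] by simp
  qed
qed

lemma omega_phi_upper:
  fixes \<phi> :: "'a::real_normed_vector \<Rightarrow> real"
  assumes "bounded (range \<phi>)" "z \<notin> cball x \<eta>" "w \<notin> cball x \<eta>" "dist z w \<le> a"
  shows "\<bar>\<phi> z - \<phi> w\<bar> \<le> omega_phi \<phi> x \<eta> a"
  unfolding omega_phi_def
  by (rule cSup_upper[OF _ omega_phi_set_bdd_above[OF assms(1)]]) (use assms in blast)

lemma exists_not_in_cball: "\<exists>z::'a::euclidean_space. z \<notin> cball x r"
  using bounded_cball not_bounded_UNIV by (metis UNIV_eq_I)

lemma omega_phi_nonneg:
  fixes \<phi> :: "'a::euclidean_space \<Rightarrow> real"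
  assumes "bounded (range \<phi>)" "0 \<le> a"
  shows "0 \<le> omega_phi \<phi> x \<eta> a"
proof -
  obtain z :: 'a where "z \<notin> cball x \<eta>" using exists_not_in_cball by blast
  then have "\<bar>\<phi> z - \<phi> z\<bar> \<le> omega_phi \<phi> x \<eta> a" using assms by (intro omega_phi_upper) auto
  then show ?thesis by simp
qed

lemma omega_phi_mono:
  fixes \<phi> :: "'a::euclidean_space \<Rightarrow> real"
  assumes "bounded (range \<phi>)" "0 \<le> a" "a \<le> b"
  shows "omega_phi \<phi> x \<eta> a \<le> omega_phi \<phi> x \<eta> b"
  unfolding omega_phi_def
proof (rule cSup_subset_mono[OF _ omega_phi_set_bdd_above[OF assms(1)]])
  obtain z :: 'a where "z \<notin> cball x \<eta>" using exists_not_in_cball by blast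
  then show "{\<bar>\<phi> z - \<phi> w\<bar> | z w. z \<notin> cball x \<eta> \<and> w \<notin> cball x \<eta> \<and> dist z w \<le> a} \<noteq> {}"
    using assms by fastforce
  show "{\<bar>\<phi> z - \<phi> w\<bar> | z w. z \<notin> cball x \<eta> \<and> w \<notin> cball x \<eta> \<and> dist z w \<le> a}
    \<subseteq> {\<bar>\<phi> z - \<phi> w\<bar> | z w. z \<notin> cball x \<eta> \<and> w \<notin> cball x \<eta> \<and> dist z w \<le> b}"
    using assms by fastforce
qed

text \<open>Walk from \<open>t v\<^sub>1\<close> to \<open>t v\<^sub>2\<close> along a great circle in \<open>\<lceil>2 t\<rceil>\<close> steps: if \<open>\<theta>\<close> is the angle
  between \<open>v\<^sub>1\<close> and \<open>v\<^sub>2\<close>, each step has length at most \<open>\<theta> / 2 \<le> |v\<^sub>1 - v\<^sub>2|\<close>.\<close>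
lemma omega_phi_sphere_bound:
  fixes \<phi> :: "'a::euclidean_space \<Rightarrow> real"
  assumes bdd: "bounded (range \<phi>)" and dim: "DIM('a) \<ge> 2"
    and v: "norm v1 = 1" "norm v2 = 1" and t: "0 \<le> \<eta>" "\<eta> < t"
  shows "\<bar>\<phi> (x + t *\<^sub>R v1) - \<phi> (x + t *\<^sub>R v2)\<bar> \<le> 2 * (1 + t) * omega_phi \<phi> x \<eta> (norm (v1 - v2))"
proof -
  obtain e \<theta> where e: "norm e = 1" "e \<bullet> v1 = 0" and th: "0 \<le> \<theta>" "\<theta> \<le> pi"
    and v2: "v2 = cos \<theta> *\<^sub>R v1 + sin \<theta> *\<^sub>R e"
    using unit_vector_on_great_circle[OF dim v] by blast
  define \<gamma> where "\<gamma> l = cos (l * \<theta>) *\<^sub>R v1 + sin (l * \<theta>) *\<^sub>R e" for l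
  define a where "a = norm (v1 - v2)"
  have t0: "0 < t" using t by simp
  have norm_\<gamma>: "norm (\<gamma> l) = 1" for l
    unfolding \<gamma>_def by (rule norm_great_circle[OF v(1) e])
  have a_ge: "\<theta> / 2 \<le> a"
    unfolding a_def v2 by (rule great_circle_angle_le[OF v(1) e th])
  define n where "n = nat \<lceil>2 * t\<rceil>"
  have n1: "2 * t \<le> real n" and n2: "real n \<le> 2 * t + 1" unfolding n_def using t0 by linarith+
  have npos: "0 < n" using n1 t0 by (cases n) auto
  define z where "z k = x + t *\<^sub>R \<gamma> (real k / real n)" for k :: nat
  have z_out: "z k \<notin> cball x \<eta>" for k
    using norm_\<gamma> t by (auto simp: z_def dist_norm)
  have step: "\<bar>\<phi> (z k) - \<phi> (z (Suc k))\<bar> \<le> omega_phi \<phi> x \<eta> a" for k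
  proof (rule omega_phi_upper[OF bdd z_out z_out])
    have "dist (z k) (z (Suc k)) = t * norm (\<gamma> (real k / real n) - \<gamma> (real (Suc k) / real n))"
      using t0 by (simp add: z_def dist_norm scaleR_diff_right[symmetric])
    also have "\<dots> \<le> t * (\<bar>real k / real n - real (Suc k) / real n\<bar> * \<theta>)"
      unfolding \<gamma>_def using t0 by (intro mult_left_mono great_circle_dist_le v e th) auto
    also have "\<dots> = t * \<theta> / real n" using npos by (simp add: field_simps)
    also have "\<dots> \<le> \<theta> / 2"
      using n1 npos t0 th by (simp add: field_simps) (metis mult.commute mult_left_mono)
    finally show "dist (z k) (z (Suc k)) \<le> a" using a_ge by simp
  qed
  have "\<phi> (z 0) - \<phi> (z n) = (\<Sum>k<n. \<phi> (z k) - \<phi> (z (Suc k)))"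
    by (rule sum_lessThan_telescope'[of "\<lambda>k. \<phi> (z k)", symmetric])
  then have "\<bar>\<phi> (z 0) - \<phi> (z n)\<bar> \<le> (\<Sum>k<n. \<bar>\<phi> (z k) - \<phi> (z (Suc k))\<bar>)"
    by (simp add: sum_abs)
  also have "\<dots> \<le> (\<Sum>k<n. omega_phi \<phi> x \<eta> a)" by (intro sum_mono step)
  also have "\<dots> = real n * omega_phi \<phi> x \<eta> a" by simp
  also have "\<dots> \<le> 2 * (1 + t) * omega_phi \<phi> x \<eta> a"
    using n2 omega_phi_nonneg[OF bdd, of a] by (intro mult_right_mono) (auto simp: a_def)
  finally show ?thesis
    using npos by (simp add: z_def \<gamma>_def v2 a_def)
qed

lemma minimax_bounds:
  fixes f :: "'a \<Rightarrow> 'a \<Rightarrow> 'b::complete_linorder"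
  assumes u: "u \<in> S" and lo: "\<And>y'. y' \<in> S \<Longrightarrow> l \<le> f u y'" and hi: "\<And>y. y \<in> S \<Longrightarrow> f y u \<le> h"
  shows "l \<le> (SUP y\<in>S. INF y'\<in>S. f y y')" and "(SUP y\<in>S. INF y'\<in>S. f y y') \<le> h"
proof -
  have "l \<le> (INF y'\<in>S. f u y')" by (rule INF_greatest) (rule lo)
  also have "\<dots> \<le> (SUP y\<in>S. INF y'\<in>S. f y y')" using u by (rule SUP_upper)
  finally show "l \<le> (SUP y\<in>S. INF y'\<in>S. f y y')" .
  show "(SUP y\<in>S. INF y'\<in>S. f y y') \<le> h"
  proof (rule SUP_least)
    fix y assume "y \<in> S"
    have "(INF y'\<in>S. f y y') \<le> f y u" using u by (rule INF_lower)
    also have "\<dots> \<le> h" using hi[OF \<open>y \<in> S\<close>] .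
    finally show "(INF y'\<in>S. f y y') \<le> h" .
  qed
qed

lemma sphere_0_1_DIM_1:
  fixes u :: "'a::euclidean_space"
  assumes "DIM('a) = 1" "norm u = 1"
  shows "sphere 0 1 = {u, -u}"
proof -
  obtain b :: 'a where b: "Basis = {b}" using assms(1) card_1_singletonE by blast
  have nb: "norm b = 1" using b by (metis insertI1 norm_Basis)
  have rep: "z = (z \<bullet> b) *\<^sub>R b" for z :: 'a
    using euclidean_representation[of z] by (simp add: b)
  have "y = u \<or> y = -u" if "norm y = 1" for y :: 'a
  proof -
    have "\<bar>y \<bullet> b\<bar> = 1" using that nb by (subst (asm) rep) simp
    moreover have "\<bar>u \<bullet> b\<bar> = 1" using assms(2) nb by (subst (asm) rep) simp
    ultimately
    have "y \<bullet> b = u \<bullet> b \<or> y \<bullet> b = - (u \<bullet> b)" by (auto simp: abs_if split: if_splits)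
    then show ?thesis by (metis rep inner_minus_left)
  qed
  then show ?thesis using assms(2) by fastforce
qed

section \<open>Taylor estimates on the ball\<close>

locale C2_cball =
  fixes \<phi> :: "'a::euclidean_space \<Rightarrow> real" and x :: 'a and \<eta> :: real
    and g :: "'a \<Rightarrow> 'a" and H :: "'a \<Rightarrow> 'a \<Rightarrow>\<^sub>L 'a"
  assumes eta_pos: "0 < \<eta>"
    and grad: "\<And>z. z \<in> cball x \<eta> \<Longrightarrow> (\<phi> has_derivative (\<lambda>h. g z \<bullet> h)) (at z within cball x \<eta>)"
    and hess: "\<And>z. z \<in> cball x \<eta> \<Longrightarrow> (g has_derivative blinfun_apply (H z)) (at z within cball x \<eta>)"
    and hess_cont: "continuous_on (cball x \<eta>) H"
begin

definition Cx :: real where "Cx = (1/2) * (SUP z\<in>ball x \<eta>. norm (H z))"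

lemma norm_hess_le: assumes "z \<in> cball x \<eta>" shows "norm (H z) \<le> 2 * Cx"
proof -
  have "bounded (H ` cball x \<eta>)"
    by (rule compact_imp_bounded[OF compact_continuous_image[OF hess_cont compact_cball]])
  then obtain B where "\<forall>z\<in>cball x \<eta>. norm (H z) \<le> B" by (auto simp: bounded_iff)
  then have B: "\<And>z. z \<in> cball x \<eta> \<Longrightarrow> norm (H z) \<le> B" by blast
  have "bdd_above ((\<lambda>z. norm (H z)) ` ball x \<eta>)"
    using B by (intro bdd_aboveI[of _ B]) auto
  then have "\<forall>y\<in>ball x \<eta>. norm (H y) \<le> (SUP z\<in>ball x \<eta>. norm (H z))"
    by (auto intro: cSUP_upper)
  moreover have "continuous_on (closure (ball x \<eta>)) H" using hess_cont eta_pos by (simp add: closure_ball)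
  moreover have "z \<in> closure (ball x \<eta>)" using assms eta_pos by (simp add: closure_ball)
  ultimately have "norm (H z) \<le> (SUP z\<in>ball x \<eta>. norm (H z))"
    by (intro continuous_on_closure_norm_le) auto
  then show ?thesis by (simp add: Cx_def)
qed

lemma Cx_nonneg: "0 \<le> Cx"
  using norm_hess_le[of x] eta_pos by (smt (verit) centre_in_cball norm_ge_zero)

lemma grad_lipschitz: assumes "z \<in> cball x \<eta>" shows "norm (g z - g x) \<le> 2 * Cx * norm (z - x)"
proof (rule differentiable_bound[OF convex_cball hess _ assms])
  show "x \<in> cball x \<eta>" using eta_pos by simp
  fix w assume "w \<in> cball x \<eta>"
  then show "onorm (blinfun_apply (H w)) \<le> 2 * Cx" using norm_hess_le by (simp add: norm_blinfun.rep_eq[symmetric])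
qed

lemma first_order_estimate:
  assumes r: "0 \<le> r" "r \<le> \<eta>" and z: "z1 \<in> cball x r" "z2 \<in> cball x r"
  shows "\<bar>\<phi> z1 - \<phi> z2 - g x \<bullet> (z1 - z2)\<bar> \<le> 2 * Cx * r * norm (z1 - z2)"
proof -
  have sub: "cball x r \<subseteq> cball x \<eta>" using r by auto
  have "norm ((\<lambda>z. \<phi> z - g x \<bullet> z) z1 - (\<lambda>z. \<phi> z - g x \<bullet> z) z2) \<le> 2 * Cx * r * norm (z1 - z2)"
  proof (rule differentiable_bound[OF convex_cball _ _ z])
    fix z assume zr: "z \<in> cball x r"
    then have "z \<in> cball x \<eta>" using sub by auto
    have "(\<phi> has_derivative (\<lambda>h. g z \<bullet> h)) (at z within cball x r)"
      by (rule has_derivative_subset[OF grad[OF \<open>z \<in> cball x \<eta>\<close>] sub])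
    then show "((\<lambda>z. \<phi> z - g x \<bullet> z) has_derivative (\<lambda>h. g z \<bullet> h - g x \<bullet> h)) (at z within cball x r)"
      by (auto intro!: derivative_eq_intros)
    show "onorm (\<lambda>h. g z \<bullet> h - g x \<bullet> h) \<le> 2 * Cx * r"
    proof (rule onorm_le)
      fix h
      have "norm (g z \<bullet> h - g x \<bullet> h) = \<bar>(g z - g x) \<bullet> h\<bar>" by (simp add: inner_diff_left)
      also have "\<dots> \<le> norm (g z - g x) * norm h" by (rule Cauchy_Schwarz_ineq2)
      also have "\<dots> \<le> (2 * Cx * norm (z - x)) * norm h"
        by (intro mult_right_mono grad_lipschitz \<open>z \<in> cball x \<eta>\<close>) auto
      also have "\<dots> \<le> (2 * Cx * r) * norm h"
        using zr Cx_nonneg by (intro mult_right_mono mult_left_mono) (auto simp: dist_norm norm_minus_commute)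
      finally show "norm (g z \<bullet> h - g x \<bullet> h) \<le> 2 * Cx * r * norm h" .
    qed
  qed
  then show ?thesis by (simp add: inner_diff_right)
qed

lemma ray_difference_first_order:
  assumes v: "norm v = 1" and w: "norm w = 1" and t: "0 \<le> t" "t \<le> \<eta>"
  shows "\<bar>\<phi> (x + t *\<^sub>R v) - \<phi> (x + t *\<^sub>R w) - t * (g x \<bullet> (v - w))\<bar> \<le> 2 * Cx * norm (v - w) * t\<^sup>2"
proof -
  have "\<bar>\<phi> (x + t *\<^sub>R v) - \<phi> (x + t *\<^sub>R w) - g x \<bullet> ((x + t *\<^sub>R v) - (x + t *\<^sub>R w))\<bar>
      \<le> 2 * Cx * t * norm ((x + t *\<^sub>R v) - (x + t *\<^sub>R w))"
    using t v w by (intro first_order_estimate) (auto simp: dist_norm)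
  moreover have "(x + t *\<^sub>R v) - (x + t *\<^sub>R w) = t *\<^sub>R (v - w)" by (simp add: algebra_simps)
  ultimately have "\<bar>\<phi> (x + t *\<^sub>R v) - \<phi> (x + t *\<^sub>R w) - g x \<bullet> (t *\<^sub>R (v - w))\<bar>
      \<le> 2 * Cx * t * norm (t *\<^sub>R (v - w))" by simp
  then show ?thesis using t by (simp add: power2_eq_square mult_ac)
qed

lemma has_vector_derivative_on_ray:
  assumes "norm v = 1" "0 < l" "l < \<eta>"
  shows "((\<lambda>l. \<phi> (x + l *\<^sub>R v)) has_vector_derivative (g (x + l *\<^sub>R v) \<bullet> v)) (at l)"
proof -
  have inb: "x + l *\<^sub>R v \<in> ball x \<eta>" using assms by (auto simp: dist_norm)
  then have "at (x + l *\<^sub>R v) within cball x \<eta> = at (x + l *\<^sub>R v)"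
    by (intro at_within_interior) simp
  then have d\<phi>: "(\<phi> has_derivative (\<lambda>h. g (x + l *\<^sub>R v) \<bullet> h)) (at (x + l *\<^sub>R v))"
    using grad[of "x + l *\<^sub>R v"] inb by auto
  have "((\<lambda>l. x + l *\<^sub>R v) has_derivative (\<lambda>h. h *\<^sub>R v)) (at l)"
    by (auto intro!: derivative_eq_intros)
  from has_derivative_compose[OF this d\<phi>]
  have "((\<lambda>l. \<phi> (x + l *\<^sub>R v)) has_derivative (\<lambda>h. h *\<^sub>R (g (x + l *\<^sub>R v) \<bullet> v))) (at l)"
    by (simp add: o_def inner_scaleR_right mult.commute)
  then show ?thesis by (simp add: has_vector_derivative_def)
qed

lemma second_difference_bound:
  assumes v: "norm v = 1" and t: "0 \<le> t" "t \<le> \<eta>"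
  shows "\<bar>Lphi \<phi> x (t *\<^sub>R v) (t *\<^sub>R v)\<bar> \<le> 2 * Cx * t\<^sup>2"
proof (cases "t = 0")
  case True then show ?thesis by (simp add: Lphi_def)
next
  case False
  then have t0: "0 < t" using t by simp
  have mv: "norm (-v) = 1" using v by simp
  let ?f = "\<lambda>l. \<phi> (x + l *\<^sub>R v) + \<phi> (x + l *\<^sub>R (-v))"
  have inc: "x + l *\<^sub>R w \<in> cball x \<eta>" if "l \<in> {0..t}" "norm w = 1" for l w
    using that t by (auto simp: dist_norm)
  have "norm (?f t - ?f 0) \<le> 2 * Cx * t\<^sup>2 - 2 * Cx * 0\<^sup>2"
  proof (rule differentiable_bound_general[OF t0, where f' = "\<lambda>l. g (x + l *\<^sub>R v) \<bullet> v + g (x + l *\<^sub>R (-v)) \<bullet> (-v)"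
        and \<phi>' = "\<lambda>l. 4 * Cx * l"])
    have "continuous_on (cball x \<eta>) \<phi>" using grad by (rule has_derivative_continuous_on)
    then have c1: "continuous_on {0..t} (\<lambda>l. \<phi> (x + l *\<^sub>R w))" if "norm w = 1" for w
      by (rule continuous_on_compose2[of _ _ "{0..t}" "\<lambda>l. x + l *\<^sub>R w"])
         (use inc that in \<open>auto intro!: continuous_intros\<close>)
    show "continuous_on {0..t} ?f" using c1[OF v] c1[OF mv] by (intro continuous_intros)
    show "continuous_on {0..t} (\<lambda>l. 2 * Cx * l\<^sup>2)" by (intro continuous_intros)
    fix l assume l: "0 < l" "l < t"
    then have l2: "l < \<eta>" using t by simp
    show "(?f has_vector_derivative g (x + l *\<^sub>R v) \<bullet> v + g (x + l *\<^sub>R (-v)) \<bullet> (-v)) (at l)"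
      by (intro has_vector_derivative_add has_vector_derivative_on_ray v mv l(1) l2)
    show "((\<lambda>l. 2 * Cx * l\<^sup>2) has_vector_derivative 4 * Cx * l) (at l)"
      by (auto intro!: derivative_eq_intros simp flip: has_real_derivative_iff_has_vector_derivative)
    have lip: "norm (g (x + l *\<^sub>R w) - g x) \<le> 2 * Cx * l" if "norm w = 1" for w
      using grad_lipschitz[OF inc[of l w]] that l by simp
    have "norm (g (x + l *\<^sub>R v) \<bullet> v + g (x + l *\<^sub>R (-v)) \<bullet> (-v))
        = \<bar>(g (x + l *\<^sub>R v) - g x) \<bullet> v - (g (x + l *\<^sub>R (-v)) - g x) \<bullet> v\<bar>"
      by (simp add: inner_diff_left)
    also have "\<dots> \<le> norm (g (x + l *\<^sub>R v) - g x) * norm v + norm (g (x + l *\<^sub>R (-v)) - g x) * norm v"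
      by (smt (verit) Cauchy_Schwarz_ineq2)
    also have "\<dots> \<le> 4 * Cx * l" using lip[OF v] lip[OF mv] v by simp
    finally show "norm (g (x + l *\<^sub>R v) \<bullet> v + g (x + l *\<^sub>R (-v)) \<bullet> (-v)) \<le> 4 * Cx * l" .
  qed
  then show ?thesis by (simp add: Lphi_def algebra_simps)
qed

end

section \<open>Ray integrals\<close>

locale fractional_setting = C2_cball \<phi> x \<eta> g H
  for \<phi> :: "'a::euclidean_space \<Rightarrow> real" and x \<eta> g H +
  fixes s :: real
  assumes s_gt: "1/2 < s" and s_lt: "s < 1"
    and bounded_phi: "bounded (range \<phi>)"
    and phi_borel[measurable]: "\<phi> \<in> borel_measurable borel"
    and grad_nonzero: "g x \<noteq> 0"
begin

abbreviation \<omega> :: "real \<Rightarrow> real" where "\<omega> \<equiv> omega_phi \<phi> x \<eta>"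

definition ray_int :: "real \<Rightarrow> 'a \<Rightarrow> real" where
  "ray_int \<delta> v = (LINT t:{\<delta>..}|mu_s s. \<phi> (x + t *\<^sub>R v) - \<phi> x)"

text \<open>The integrals of \<open>t\<close> and \<open>t\<^sup>2\<close> over \<open>[\<epsilon>, \<eta>]\<close> and of \<open>1 + t\<close> over \<open>(\<eta>, \<infinity>)\<close>
  with respect to \<open>\<mu>\<^sub>s\<close>.\<close>
definition moment1 :: "real \<Rightarrow> real" where
  "moment1 \<epsilon> = Cs s * (\<epsilon> powr (1 - 2 * s) - \<eta> powr (1 - 2 * s)) / (2 * s - 1)"

definition moment2 :: "real \<Rightarrow> real" where
  "moment2 \<epsilon> = Cs s * (\<eta> powr (2 - 2 * s) - \<epsilon> powr (2 - 2 * s)) / (2 - 2 * s)"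

definition tail_moment :: real where
  "tail_moment = Cs s * \<eta> powr (- 2 * s) / (2 * s) + Cs s * \<eta> powr (1 - 2 * s) / (2 * s - 1)"

lemma moment_bounds:
  assumes "0 < \<epsilon>" "\<epsilon> < \<eta>"
  shows "0 < moment1 \<epsilon>" and "0 \<le> moment2 \<epsilon>" and "0 \<le> tail_moment"
proof -
  have C: "0 < Cs s" using Cs_pos[OF s_gt s_lt] .
  have "\<eta> powr (1 - 2 * s) < \<epsilon> powr (1 - 2 * s)" using assms s_gt by (simp add: powr_less_mono2_neg)
  then show "0 < moment1 \<epsilon>" using C s_gt by (simp add: moment1_def)
  have "\<epsilon> powr (2 - 2 * s) \<le> \<eta> powr (2 - 2 * s)" using assms s_lt by (intro powr_mono2) auto
  then show "0 \<le> moment2 \<epsilon>" using C s_lt by (simp add: moment2_def)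
  show "0 \<le> tail_moment" using C s_gt eta_pos by (simp add: tail_moment_def)
qed

lemma set_integral_moments:
  assumes "0 < \<epsilon>" "\<epsilon> \<le> \<eta>"
  shows "set_integrable (mu_s s) {\<epsilon>..\<eta>} (\<lambda>t. t powr 1)" "(LINT t:{\<epsilon>..\<eta>}|mu_s s. t powr 1) = moment1 \<epsilon>"
    and "set_integrable (mu_s s) {\<epsilon>..\<eta>} (\<lambda>t. t powr 2)" "(LINT t:{\<epsilon>..\<eta>}|mu_s s. t powr 2) = moment2 \<epsilon>"
proof -
  have e: "1 \<noteq> 2 * s" "2 \<noteq> 2 * s" using s_gt s_lt by auto
  note P1 = mu_s_integral_powr_atLeastAtMost[OF s_gt s_lt assms e(1)]
  note P2 = mu_s_integral_powr_atLeastAtMost[OF s_gt s_lt assms e(2)]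
  show "set_integrable (mu_s s) {\<epsilon>..\<eta>} (\<lambda>t. t powr 1)" "set_integrable (mu_s s) {\<epsilon>..\<eta>} (\<lambda>t. t powr 2)"
    using P1(1) P2(1) .
  show "(LINT t:{\<epsilon>..\<eta>}|mu_s s. t powr 2) = moment2 \<epsilon>" using P2(2) by (simp add: moment2_def)
  have "Cs s * (\<eta> powr (1 - 2 * s) - \<epsilon> powr (1 - 2 * s)) / (1 - 2 * s) = moment1 \<epsilon>"
    unfolding moment1_def by (metis minus_diff_eq minus_divide_divide mult_minus_right)
  then show "(LINT t:{\<epsilon>..\<eta>}|mu_s s. t powr 1) = moment1 \<epsilon>" using P1(2) by simp
qed

lemma set_integral_tail_moment:
  shows "set_integrable (mu_s s) {\<eta><..} (\<lambda>t. t powr 0 + t powr 1)"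
    and "(LINT t:{\<eta><..}|mu_s s. t powr 0 + t powr 1) = tail_moment"
proof -
  note T0 = mu_s_integral_powr_atLeast[OF s_gt s_lt eta_pos, of 0]
  note T1 = mu_s_integral_powr_atLeast[OF s_gt s_lt eta_pos, of 1]
  have i0: "set_integrable (mu_s s) {\<eta><..} (\<lambda>t. t powr 0)"
    using T0(1) s_gt by (subst mu_s_set_integral_greaterThan) auto
  have i1: "set_integrable (mu_s s) {\<eta><..} (\<lambda>t. t powr 1)"
    using T1(1) s_gt by (subst mu_s_set_integral_greaterThan) auto
  show "set_integrable (mu_s s) {\<eta><..} (\<lambda>t. t powr 0 + t powr 1)" using i0 i1 by (rule set_integral_add)
  have "(LINT t:{\<eta><..}|mu_s s. t powr 0 + t powr 1)
      = (LINT t:{\<eta><..}|mu_s s. t powr 0) + (LINT t:{\<eta><..}|mu_s s. t powr 1)"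
    using i0 i1 by (rule set_integral_add)
  also have "\<dots> = tail_moment"
    using T0(2) T1(2) s_gt by (simp add: mu_s_set_integral_greaterThan(2) tail_moment_def)
  finally show "(LINT t:{\<eta><..}|mu_s s. t powr 0 + t powr 1) = tail_moment" .
qed

lemma phi_bounded: obtains B where "\<And>z. \<bar>\<phi> z\<bar> \<le> B"
  using bounded_phi by (auto simp: bounded_iff)

lemma set_integrable_ray_difference:
  assumes "0 < a"
  shows "set_integrable (mu_s s) {a..} (\<lambda>t. \<phi> (x + t *\<^sub>R v) - \<phi> (x + t *\<^sub>R w))"
proof -
  obtain B where B: "\<And>z. \<bar>\<phi> z\<bar> \<le> B" using phi_bounded by blast
  show ?thesis
  proof (rule set_integrable_mu_s_bounded[OF s_gt s_lt assms, where B="2*B"])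
    fix t show "\<bar>\<phi> (x + t *\<^sub>R v) - \<phi> (x + t *\<^sub>R w)\<bar> \<le> 2 * B"
      using B[of "x + t *\<^sub>R v"] B[of "x + t *\<^sub>R w"] by simp
  qed measurable
qed

lemma set_integrable_ray:
  assumes "0 < a"
  shows "set_integrable (mu_s s) {a..} (\<lambda>t. \<phi> (x + t *\<^sub>R v) - \<phi> x)"
  using set_integrable_ray_difference[OF assms, of v 0] by simp

lemma ray_int_diff:
  assumes "0 < a"
  shows "ray_int a v - ray_int a w = (LINT t:{a..}|mu_s s. \<phi> (x + t *\<^sub>R v) - \<phi> (x + t *\<^sub>R w))"
  unfolding ray_int_def
  using set_integral_diff(2)[OF set_integrable_ray[OF assms, of v] set_integrable_ray[OF assms, of w]] by simp

lemma trunc_int_eq_ray_int: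
  assumes "0 < a"
  shows "trunc_int s \<phi> x y y' a = ray_int a y + ray_int a (-y')"
proof -
  have "trunc_int s \<phi> x y y' a
      = (LINT t:{a..}|mu_s s. (\<phi> (x + t *\<^sub>R y) - \<phi> x) + (\<phi> (x + t *\<^sub>R (-y')) - \<phi> x))"
    unfolding trunc_int_def Lphi_def by (simp add: algebra_simps)
  also have "\<dots> = ray_int a y + ray_int a (-y')"
    unfolding ray_int_def by (rule set_integral_add(2)[OF set_integrable_ray[OF assms] set_integrable_ray[OF assms]])
  finally show ?thesis .
qed

lemma ray_difference_integral_near_ge:
  assumes v: "norm v = 1" and w: "norm w = 1" and eps: "0 < \<epsilon>" "\<epsilon> \<le> \<eta>"
  shows "g x \<bullet> (v - w) * moment1 \<epsilon> - 2 * Cx * norm (v - w) * moment2 \<epsilon>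
    \<le> (LINT t:{\<epsilon>..\<eta>}|mu_s s. \<phi> (x + t *\<^sub>R v) - \<phi> (x + t *\<^sub>R w))"
proof -
  let ?D = "\<lambda>t. \<phi> (x + t *\<^sub>R v) - \<phi> (x + t *\<^sub>R w)"
  define a where "a = norm (v - w)"
  define c where "c = g x \<bullet> (v - w)"
  note M = set_integral_moments[OF eps]
  have "(LINT t:{\<epsilon>..\<eta>}|mu_s s. c * t powr 1 - 2 * Cx * a * t powr 2) \<le> (LINT t:{\<epsilon>..\<eta>}|mu_s s. ?D t)"
  proof (rule set_integral_mono)
    show "set_integrable (mu_s s) {\<epsilon>..\<eta>} (\<lambda>t. c * t powr 1 - 2 * Cx * a * t powr 2)"
      using M(1,3) by (intro set_integral_diff(1) set_integrable_mult_right)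
    show "set_integrable (mu_s s) {\<epsilon>..\<eta>} ?D"
      by (rule set_integrable_subset[OF set_integrable_ray_difference[OF eps(1)]]) auto
    fix t assume t: "t \<in> {\<epsilon>..\<eta>}"
    then have "0 < t" using eps by simp
    with ray_difference_first_order[OF v w, of t] t
    show "c * t powr 1 - 2 * Cx * a * t powr 2 \<le> ?D t"
      by (simp add: a_def c_def abs_le_iff power2_eq_square mult_ac)
  qed
  moreover have "(LINT t:{\<epsilon>..\<eta>}|mu_s s. c * t powr 1 - 2 * Cx * a * t powr 2)
      = c * moment1 \<epsilon> - 2 * Cx * a * moment2 \<epsilon>"
    using M by (subst set_integral_diff(2)) (auto intro: set_integrable_mult_right)
  ultimately show ?thesis by (simp add: a_def c_def)
qed

lemma ray_difference_integral_far_ge: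
  assumes dim: "DIM('a) \<ge> 2" and v: "norm v = 1" and w: "norm w = 1"
  shows "- 2 * \<omega> (norm (v - w)) * tail_moment \<le> (LINT t:{\<eta><..}|mu_s s. \<phi> (x + t *\<^sub>R v) - \<phi> (x + t *\<^sub>R w))"
proof -
  let ?D = "\<lambda>t. \<phi> (x + t *\<^sub>R v) - \<phi> (x + t *\<^sub>R w)"
  define k where "k = - 2 * \<omega> (norm (v - w))"
  note T = set_integral_tail_moment
  have "(LINT t:{\<eta><..}|mu_s s. k * (t powr 0 + t powr 1)) \<le> (LINT t:{\<eta><..}|mu_s s. ?D t)"
  proof (rule set_integral_mono)
    show "set_integrable (mu_s s) {\<eta><..} (\<lambda>t. k * (t powr 0 + t powr 1))"
      using T(1) by (rule set_integrable_mult_right)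
    show "set_integrable (mu_s s) {\<eta><..} ?D"
      by (rule set_integrable_subset[OF set_integrable_ray_difference[OF eta_pos]]) auto
    fix t assume "t \<in> {\<eta><..}"
    then have t: "0 < t" "\<eta> < t" using eta_pos by auto
    have "\<bar>?D t\<bar> \<le> 2 * (1 + t) * \<omega> (norm (v - w))"
      by (rule omega_phi_sphere_bound[OF bounded_phi dim v w less_imp_le[OF eta_pos] t(2)])
    then show "k * (t powr 0 + t powr 1) \<le> ?D t"
      using t by (simp add: k_def algebra_simps)
  qed
  then show ?thesis unfolding set_integral_mult_right T(2) k_def .
qed

lemma ray_int_diff_ge:
  assumes dim: "DIM('a) \<ge> 2" and v: "norm v = 1" and w: "norm w = 1" and eps: "0 < \<epsilon>" "\<epsilon> < \<eta>"
  shows "g x \<bullet> (v - w) * moment1 \<epsilon> - 2 * Cx * norm (v - w) * moment2 \<epsilon> - 2 * \<omega> (norm (v - w)) * tail_moment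
    \<le> ray_int \<epsilon> v - ray_int \<epsilon> w"
proof -
  let ?D = "\<lambda>t. \<phi> (x + t *\<^sub>R v) - \<phi> (x + t *\<^sub>R w)"
  have intD: "set_integrable (mu_s s) {\<epsilon>..} ?D" by (rule set_integrable_ray_difference[OF eps(1)])
  have split: "{\<epsilon>..} = {\<epsilon>..\<eta>} \<union> {\<eta><..}" using eps by auto
  have "ray_int \<epsilon> v - ray_int \<epsilon> w = (LINT t:{\<epsilon>..\<eta>}|mu_s s. ?D t) + (LINT t:{\<eta><..}|mu_s s. ?D t)"
    unfolding ray_int_diff[OF eps(1)] split
    by (intro set_integral_Un set_integrable_subset[OF intD]) (use eps in auto)
  then show ?thesis
    using ray_difference_integral_near_ge[OF v w eps(1) less_imp_le[OF eps(2)]]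
      ray_difference_integral_far_ge[OF dim v w] by linarith
qed

lemma ray_int_diff_ge_first_moment:
  assumes v: "norm v = 1" and w: "norm w = 1" and d: "0 < d" "d < r" and r: "r \<le> \<eta>"
    and small: "4 * Cx * norm (v - w) * r \<le> g x \<bullet> (v - w)"
  shows "(LINT t:{r<..}|mu_s s. \<phi> (x + t *\<^sub>R v) - \<phi> (x + t *\<^sub>R w))
      + g x \<bullet> (v - w) / 2 * (LINT t:{d..r}|mu_s s. t powr 1) \<le> ray_int d v - ray_int d w"
proof -
  let ?D = "\<lambda>t. \<phi> (x + t *\<^sub>R v) - \<phi> (x + t *\<^sub>R w)"
  define c where "c = g x \<bullet> (v - w)"
  define k where "k = Cx * norm (v - w)"
  have k0: "0 \<le> k" using Cx_nonneg by (simp add: k_def)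
  have intD: "set_integrable (mu_s s) {d..} ?D" by (rule set_integrable_ray_difference[OF d(1)])
  have split: "{d..} = {d..r} \<union> {r<..}" using d by auto
  have eq: "ray_int d v - ray_int d w = (LINT t:{d..r}|mu_s s. ?D t) + (LINT t:{r<..}|mu_s s. ?D t)"
    unfolding ray_int_diff[OF d(1)] split
    by (intro set_integral_Un set_integrable_subset[OF intD]) (use d in auto)
  note P1 = mu_s_integral_powr_atLeastAtMost(1)[OF s_gt s_lt d(1) less_imp_le[OF d(2)], of 1]
  have "(LINT t:{d..r}|mu_s s. c / 2 * t powr 1) \<le> (LINT t:{d..r}|mu_s s. ?D t)"
  proof (rule set_integral_mono)
    show "set_integrable (mu_s s) {d..r} (\<lambda>t. c / 2 * t powr 1)"
      using P1 s_gt by (intro set_integrable_mult_right) auto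
    show "set_integrable (mu_s s) {d..r} ?D" by (rule set_integrable_subset[OF intD]) auto
    fix t assume t: "t \<in> {d..r}"
    then have tp: "0 < t" using d by simp
    have "4 * k * t \<le> 4 * k * r" using t k0 by (intro mult_left_mono) auto
    then have "2 * k * t \<le> c / 2" using small by (simp add: c_def k_def)
    then have "t * (2 * k * t) \<le> t * (c / 2)" using tp by (intro mult_left_mono) auto
    then have "2 * k * t\<^sup>2 \<le> t * c - c / 2 * t powr 1" using tp by (simp add: power2_eq_square mult_ac)
    moreover have "\<bar>?D t - t * c\<bar> \<le> 2 * k * t\<^sup>2"
      using ray_difference_first_order[OF v w, of t] tp t r by (simp add: c_def k_def)
    ultimately show "c / 2 * t powr 1 \<le> ?D t" unfolding abs_le_iff by linarith
  qed
  then show ?thesis using eq by (simp add: set_integral_mult_right c_def)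
qed

lemma ray_int_diff_tendsto_at_top:
  assumes v: "norm v = 1" and w: "norm w = 1" and c: "0 < g x \<bullet> (v - w)"
  shows "filterlim (\<lambda>\<delta>. ray_int \<delta> v - ray_int \<delta> w) at_top (at_right 0)"
proof -
  define c where "c = g x \<bullet> (v - w)"
  define k where "k = Cx * norm (v - w)"
  have c0: "0 < c" and k0: "0 \<le> k" using c Cx_nonneg by (simp_all add: c_def k_def)
  define r where "r = min \<eta> (c / (4 * k + 1))"
  have r0: "0 < r" and r\<eta>: "r \<le> \<eta>" using eta_pos c0 k0 by (simp_all add: r_def)
  have "4 * k * r \<le> 4 * k * (c / (4 * k + 1))" using k0 by (intro mult_left_mono) (auto simp: r_def)
  also have "\<dots> \<le> c" using k0 c0 by (simp add: field_simps)
  finally have small: "4 * Cx * norm (v - w) * r \<le> g x \<bullet> (v - w)" by (simp add: c_def k_def mult_ac)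
  define K where "K = (LINT t:{r<..}|mu_s s. \<phi> (x + t *\<^sub>R v) - \<phi> (x + t *\<^sub>R w))"
  have "filterlim (\<lambda>d. K + c / 2 * (LINT t:{d..r}|mu_s s. t powr 1)) at_top (at_right 0)"
    using c0 by (intro filterlim_tendsto_add_at_top[OF tendsto_const]
        filterlim_tendsto_pos_mult_at_top[OF tendsto_const] mu_s_first_moment_tendsto_at_top s_gt s_lt r0) auto
  moreover have "eventually (\<lambda>d. K + c / 2 * (LINT t:{d..r}|mu_s s. t powr 1) \<le> ray_int d v - ray_int d w) (at_right 0)"
    using eventually_at_right_real[OF r0] unfolding K_def c_def
    by eventually_elim (rule ray_int_diff_ge_first_moment[OF v w _ _ r\<eta> small]; simp)
  ultimately show ?thesis by (rule filterlim_at_top_mono)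
qed

lemma set_integrable_Lphi:
  assumes "0 < a"
  shows "set_integrable (mu_s s) {a..} (\<lambda>t. Lphi \<phi> x (t *\<^sub>R y) (t *\<^sub>R y'))"
proof -
  have "set_integrable (mu_s s) {a..} (\<lambda>t. (\<phi> (x + t *\<^sub>R y) - \<phi> x) + (\<phi> (x + t *\<^sub>R (-y')) - \<phi> x))"
    by (intro set_integral_add set_integrable_ray assms)
  then show ?thesis by (simp add: Lphi_def algebra_simps)
qed

lemma set_integrable_Lphi_near_0:
  assumes u: "norm u = 1" and eps: "0 < \<epsilon>" "\<epsilon> \<le> \<eta>"
  shows "set_integrable (mu_s s) {0<..\<epsilon>} (\<lambda>t. Lphi \<phi> x (t *\<^sub>R u) (t *\<^sub>R u))"
proof (rule set_integrable_bound)
  show "set_integrable (mu_s s) {0<..\<epsilon>} (\<lambda>t. 2 * Cx * t powr 2)"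
    using s_gt s_lt by (intro set_integrable_mult_right set_integrable_mu_s_powr_greaterThanAtMost eps(1)) auto
  show "set_borel_measurable (mu_s s) {0<..\<epsilon>} (\<lambda>t. Lphi \<phi> x (t *\<^sub>R u) (t *\<^sub>R u))"
    unfolding set_borel_measurable_def Lphi_def by measurable
  show "AE t in mu_s s. t \<in> {0<..\<epsilon>} \<longrightarrow> norm (Lphi \<phi> x (t *\<^sub>R u) (t *\<^sub>R u)) \<le> norm (2 * Cx * t powr 2)"
  proof (rule AE_I2, intro impI)
    fix t assume "t \<in> {0<..\<epsilon>}"
    then have t: "0 < t" "t \<le> \<eta>" using eps by auto
    then show "norm (Lphi \<phi> x (t *\<^sub>R u) (t *\<^sub>R u)) \<le> norm (2 * Cx * t powr 2)"
      using second_difference_bound[OF u, of t] Cx_nonneg by simp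
  qed
qed

lemma Lphi_integral_near_0_bound:
  assumes u: "norm u = 1" and d: "0 < d" "d \<le> \<epsilon>" and eps: "\<epsilon> \<le> \<eta>"
  shows "\<bar>LINT t:{d..\<epsilon>}|mu_s s. Lphi \<phi> x (t *\<^sub>R u) (t *\<^sub>R u)\<bar> \<le> 2 * Cx * (Cs s * \<epsilon> powr (2 - 2 * s) / (2 - 2 * s))"
proof -
  let ?Q = "\<lambda>t. Lphi \<phi> x (t *\<^sub>R u) (t *\<^sub>R u)"
  have e: "2 \<noteq> 2 * s" using s_lt by simp
  note P2 = mu_s_integral_powr_atLeastAtMost[OF s_gt s_lt d e]
  define M where "M = Cs s * (\<epsilon> powr (2 - 2 * s) - d powr (2 - 2 * s)) / (2 - 2 * s)"
  have iQ: "set_integrable (mu_s s) {d..\<epsilon>} ?Q" by (rule set_integrable_subset[OF set_integrable_Lphi[OF d(1)]]) auto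
  have Qb: "- (2 * Cx) * t powr 2 \<le> ?Q t \<and> ?Q t \<le> 2 * Cx * t powr 2" if "t \<in> {d..\<epsilon>}" for t
  proof -
    have "\<bar>?Q t\<bar> \<le> 2 * Cx * t powr 2" using second_difference_bound[OF u, of t] that d eps by simp
    then show ?thesis unfolding abs_le_iff by linarith
  qed
  have "(LINT t:{d..\<epsilon>}|mu_s s. ?Q t) \<le> (LINT t:{d..\<epsilon>}|mu_s s. 2 * Cx * t powr 2)"
    using Qb by (intro set_integral_mono[OF iQ] set_integrable_mult_right P2(1)) auto
  moreover have "(LINT t:{d..\<epsilon>}|mu_s s. (- (2 * Cx)) * t powr 2) \<le> (LINT t:{d..\<epsilon>}|mu_s s. ?Q t)"
    using Qb by (intro set_integral_mono[OF _ iQ] set_integrable_mult_right P2(1)) auto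
  moreover have "M \<le> Cs s * \<epsilon> powr (2 - 2 * s) / (2 - 2 * s)"
    unfolding M_def using Cs_pos[OF s_gt s_lt] s_lt by (intro divide_right_mono mult_left_mono) auto
  then have "2 * Cx * M \<le> 2 * Cx * (Cs s * \<epsilon> powr (2 - 2 * s) / (2 - 2 * s))"
    using Cx_nonneg by (intro mult_left_mono) auto
  ultimately show ?thesis
    unfolding set_integral_mult_right P2(2) M_def[symmetric] abs_le_iff by linarith
qed

lemma trunc_int_symmetric_converges:
  assumes u: "norm u = 1" and eps: "0 < \<epsilon>" "\<epsilon> \<le> \<eta>"
  shows "\<exists>F. ((\<lambda>\<delta>. trunc_int s \<phi> x u u \<delta>) \<longlongrightarrow> F) (at_right 0) \<and>
     \<bar>F - trunc_int s \<phi> x u u \<epsilon>\<bar> \<le> cs s * s * Cx * \<epsilon> powr (2 - 2 * s)"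
proof -
  let ?Q = "\<lambda>t. Lphi \<phi> x (t *\<^sub>R u) (t *\<^sub>R u)"
  have Qm[measurable]: "?Q \<in> borel_measurable borel" unfolding Lphi_def by measurable
  define F where "F = (LINT t:{0<..\<epsilon>}|mu_s s. ?Q t) + (LINT t:{\<epsilon><..}|mu_s s. ?Q t)"
  have near: "((\<lambda>d. LINT t:{d..\<epsilon>}|mu_s s. ?Q t) \<longlongrightarrow> (LINT t:{0<..\<epsilon>}|mu_s s. ?Q t)) (at_right 0)"
    by (rule tendsto_set_lebesgue_integral_at_right[OF eps(1) _ set_integrable_Lphi_near_0[OF u eps]]) simp
  have split: "trunc_int s \<phi> x u u d = (LINT t:{d..\<epsilon>}|mu_s s. ?Q t) + (LINT t:{\<epsilon><..}|mu_s s. ?Q t)"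
    if d: "0 < d" "d < \<epsilon>" for d
  proof -
    have "{d..} = {d..\<epsilon>} \<union> {\<epsilon><..}" using d by auto
    then show ?thesis unfolding trunc_int_def
      by (simp only:) (intro set_integral_Un set_integrable_subset[OF set_integrable_Lphi[OF d(1)]], use d in auto)
  qed
  have "((\<lambda>d. (LINT t:{d..\<epsilon>}|mu_s s. ?Q t) + (LINT t:{\<epsilon><..}|mu_s s. ?Q t)) \<longlongrightarrow> F) (at_right 0)"
    unfolding F_def by (intro tendsto_add near tendsto_const)
  moreover have "\<forall>\<^sub>F d in at_right 0. (LINT t:{d..\<epsilon>}|mu_s s. ?Q t) + (LINT t:{\<epsilon><..}|mu_s s. ?Q t) = trunc_int s \<phi> x u u d"
    using eventually_at_right_real[OF eps(1)] by eventually_elim (simp add: split)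
  ultimately have lim: "((\<lambda>\<delta>. trunc_int s \<phi> x u u \<delta>) \<longlongrightarrow> F) (at_right 0)"
    by (rule tendsto_cong[THEN iffD1, rotated])
  have "\<bar>LINT t:{0<..\<epsilon>}|mu_s s. ?Q t\<bar> \<le> 2 * Cx * (Cs s * \<epsilon> powr (2 - 2 * s) / (2 - 2 * s))"
  proof (rule tendsto_upperbound[OF tendsto_rabs[OF near]])
    show "\<forall>\<^sub>F d in at_right 0. \<bar>LINT t:{d..\<epsilon>}|mu_s s. ?Q t\<bar> \<le> 2 * Cx * (Cs s * \<epsilon> powr (2 - 2 * s) / (2 - 2 * s))"
      using eventually_at_right_real[OF eps(1)]
      by eventually_elim (rule Lphi_integral_near_0_bound[OF u _ _ eps(2)]; simp)
  qed (simp add: trivial_limit_at_right_real)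
  moreover have "trunc_int s \<phi> x u u \<epsilon> = (LINT t:{\<epsilon><..}|mu_s s. ?Q t)"
    unfolding trunc_int_def using mu_s_set_integral_greaterThan(2)[OF Qm] by simp
  moreover have "2 * Cx * (Cs s * \<epsilon> powr (2 - 2 * s) / (2 - 2 * s)) = cs s * s * Cx * \<epsilon> powr (2 - 2 * s)"
    using s_gt s_lt by (simp add: cs_def field_simps)
  ultimately show ?thesis using lim by (intro exI[of _ F]) (simp add: F_def)
qed

section \<open>The error term and the two operators\<close>

lemma kappa_eps_bounds:
  assumes eps: "0 < \<epsilon>" "\<epsilon> < \<eta>"
  shows "0 \<le> kappa_eps s \<phi> x \<eta> (g x) \<epsilon>"
    and "kappa_eps s \<phi> x \<eta> (g x) \<epsilon> < a \<Longrightarrow> a \<le> 2 \<Longrightarrow> 8 * \<omega> a * tail_moment < norm (g x) * a\<^sup>2 * moment1 \<epsilon>"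
proof -
  define np where "np = norm (g x)"
  define Dd where "Dd = \<epsilon> powr (1 - 2 * s) - \<eta> powr (1 - 2 * s)"
  define S where "S = ((2 * s - 1) / (2 * s)) * \<eta> powr (-2 * s) + \<eta> powr (1 - 2 * s)"
  define K where "K = {a \<in> {0..2}. a\<^sup>2 \<le> 8 * \<omega> a / np * S / Dd}"
  have np0: "0 < np" using grad_nonzero by (simp add: np_def)
  have s3: "0 < 2 * s - 1" using s_gt by simp
  have Dd0: "0 < Dd" unfolding Dd_def using eps s_gt by (simp add: powr_less_mono2_neg)
  have S0: "0 < S" unfolding S_def using s3 eta_pos by (intro add_pos_pos mult_pos_pos) auto
  have kappa: "kappa_eps s \<phi> x \<eta> (g x) \<epsilon> = Sup K"
    unfolding kappa_eps_def K_def np_def S_def Dd_def by simp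
  have Kbdd: "bdd_above K" by (rule bdd_aboveI[of _ 2]) (auto simp: K_def)
  have "0 \<in> K" using omega_phi_nonneg[OF bounded_phi, of 0] np0 S0 Dd0 by (auto simp: K_def)
  then show K0: "0 \<le> kappa_eps s \<phi> x \<eta> (g x) \<epsilon>" unfolding kappa using Kbdd by (rule cSup_upper)
  assume a: "kappa_eps s \<phi> x \<eta> (g x) \<epsilon> < a" "a \<le> 2"
  then have "a \<notin> K" using cSup_upper[OF _ Kbdd] unfolding kappa by force
  then have "8 * \<omega> a / np * S / Dd < a\<^sup>2" using a K0 by (auto simp: K_def)
  then have "8 * \<omega> a * S < np * a\<^sup>2 * Dd" using np0 Dd0 by (simp add: field_simps)
  then have "Cs s / (2 * s - 1) * (8 * \<omega> a * S) < Cs s / (2 * s - 1) * (np * a\<^sup>2 * Dd)"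
    using Cs_pos[OF s_gt s_lt] s3 by (intro mult_strict_left_mono) auto
  then show "8 * \<omega> a * tail_moment < norm (g x) * a\<^sup>2 * moment1 \<epsilon>"
    using s3 by (simp add: tail_moment_def moment1_def S_def Dd_def np_def field_simps)
qed

lemma A_eps_nonneg:
  assumes "0 < \<epsilon>" "\<epsilon> < \<eta>"
  shows "0 \<le> A_eps s \<phi> x \<eta> (g x) Cx \<epsilon>"
  using kappa_eps_bounds(1)[OF assms] by (simp add: A_eps_def)

lemma gt_A_eps_imp:
  assumes eps: "0 < \<epsilon>" "\<epsilon> < \<eta>" and a: "A_eps s \<phi> x \<eta> (g x) Cx \<epsilon> < a" "a \<le> 2"
  shows "8 * Cx * a * moment2 \<epsilon> \<le> norm (g x) * a\<^sup>2 * moment1 \<epsilon>"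
    and "8 * \<omega> a * tail_moment \<le> norm (g x) * a\<^sup>2 * moment1 \<epsilon>"
proof -
  define np where "np = norm (g x)"
  define E where "E = \<eta> powr (2 - 2 * s) - \<epsilon> powr (2 - 2 * s)"
  define Dd where "Dd = \<epsilon> powr (1 - 2 * s) - \<eta> powr (1 - 2 * s)"
  define q where "q = 2 * s - 1"
  define m where "m = 1 - s"
  have np0: "0 < np" using grad_nonzero by (simp add: np_def)
  have q0: "0 < q" and m0: "0 < m" using s_gt s_lt by (auto simp: q_def m_def)
  have Dd0: "0 < Dd" unfolding Dd_def using eps s_gt by (simp add: powr_less_mono2_neg)
  have "\<epsilon> powr (2 - 2 * s) \<le> \<eta> powr (2 - 2 * s)" using eps s_lt by (intro powr_mono2) auto
  then have E0: "0 \<le> q * Cx * E" using q0 Cx_nonneg by (simp add: E_def)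
  have a0: "0 \<le> a" using A_eps_nonneg[OF eps] a(1) by simp
  define X where "X = 16 * Cx / np * (q / m) * (E / Dd)"
  have "X < a" using a(1) by (simp add: A_eps_def X_def np_def E_def Dd_def q_def m_def)
  then have "X * (np * Dd * m) < a * (np * Dd * m)"
    using np0 Dd0 m0 by (intro mult_strict_right_mono) auto
  moreover have "X * (np * Dd * m) = 16 * q * Cx * E"
    using np0 Dd0 m0 by (simp add: X_def field_simps)
  ultimately have "4 * q * Cx * E \<le> np * a * Dd * m" using E0 by (simp add: mult_ac)
  then have "(a * Cs s / (q * m)) * (4 * q * Cx * E) \<le> (a * Cs s / (q * m)) * (np * a * Dd * m)"
    using a0 Cs_pos[OF s_gt s_lt] q0 m0 by (intro mult_left_mono) auto
  moreover have "(a * Cs s / (q * m)) * (4 * q * Cx * E) = 8 * Cx * a * moment2 \<epsilon>"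
  proof -
    have "moment2 \<epsilon> = Cs s * E / (2 * m)" by (simp add: moment2_def E_def m_def algebra_simps)
    then show ?thesis using q0 m0 by (simp add: field_simps)
  qed
  moreover have "(a * Cs s / (q * m)) * (np * a * Dd * m) = norm (g x) * a\<^sup>2 * moment1 \<epsilon>"
  proof -
    have "moment1 \<epsilon> = Cs s * Dd / q" by (simp add: moment1_def Dd_def q_def)
    then show ?thesis using q0 m0 by (simp add: np_def field_simps power2_eq_square)
  qed
  ultimately show "8 * Cx * a * moment2 \<epsilon> \<le> norm (g x) * a\<^sup>2 * moment1 \<epsilon>" by simp
  have "kappa_eps s \<phi> x \<eta> (g x) \<epsilon> < a" using a(1) by (simp add: A_eps_def)
  then show "8 * \<omega> a * tail_moment \<le> norm (g x) * a\<^sup>2 * moment1 \<epsilon>"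
    using kappa_eps_bounds(2)[OF eps _ a(2)] by simp
qed

definition B_eps :: "real \<Rightarrow> real" where
  "B_eps \<epsilon> = 4 * cs s * s * Cx * (\<eta> powr (2 - 2 * s) - \<epsilon> powr (2 - 2 * s)) * A_eps s \<phi> x \<eta> (g x) Cx \<epsilon>
    + cs s * (1 - s) * (\<eta> powr (-2 * s) + (2 * s / (2 * s - 1)) * \<eta> powr (1 - 2 * s))
      * \<omega> (A_eps s \<phi> x \<eta> (g x) Cx \<epsilon>)"

lemma B_eps_eq:
  "B_eps \<epsilon> = 8 * Cx * A_eps s \<phi> x \<eta> (g x) Cx \<epsilon> * moment2 \<epsilon> + 2 * \<omega> (A_eps s \<phi> x \<eta> (g x) Cx \<epsilon>) * tail_moment"
proof -
  define A where "A = A_eps s \<phi> x \<eta> (g x) Cx \<epsilon>"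
  have q0: "0 < 2 * s - 1" and m0: "0 < 1 - s" using s_gt s_lt by auto
  have "4 * cs s * s * Cx * (\<eta> powr (2 - 2 * s) - \<epsilon> powr (2 - 2 * s)) * A = 8 * Cx * A * moment2 \<epsilon>"
    using q0 m0 s_gt by (simp add: cs_def moment2_def field_simps)
  moreover have "cs s * (1 - s) * (\<eta> powr (-2 * s) + (2 * s / (2 * s - 1)) * \<eta> powr (1 - 2 * s)) = 2 * tail_moment"
  proof -
    define C where "C = Cs s"
    have c1: "cs s * (1 - s) = C / s" using m0 s_gt by (simp add: cs_def C_def field_simps)
    have c2: "C / s * (2 * s / (2 * s - 1)) = 2 * (C / (2 * s - 1))" using q0 s_gt by (simp add: field_simps)
    have "cs s * (1 - s) * (\<eta> powr (-2 * s) + (2 * s / (2 * s - 1)) * \<eta> powr (1 - 2 * s))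
        = C / s * \<eta> powr (-2 * s) + (C / s * (2 * s / (2 * s - 1))) * \<eta> powr (1 - 2 * s)"
      unfolding c1 by (simp add: algebra_simps)
    also have "\<dots> = 2 * tail_moment" unfolding c2 tail_moment_def C_def[symmetric] by (simp add: field_simps)
    finally show ?thesis .
  qed
  ultimately show ?thesis unfolding B_eps_def A_def[symmetric] by simp
qed

lemma B_eps_nonneg:
  assumes "0 < \<epsilon>" "\<epsilon> < \<eta>"
  shows "0 \<le> B_eps \<epsilon>"
  unfolding B_eps_eq using A_eps_nonneg[OF assms] moment_bounds[OF assms] Cx_nonneg
    omega_phi_nonneg[OF bounded_phi A_eps_nonneg[OF assms]] by simp

lemma drift_dominates_error:
  assumes eps: "0 < \<epsilon>" "\<epsilon> < \<eta>" and a: "0 \<le> a" "a \<le> 2"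
  shows "- B_eps \<epsilon> \<le> norm (g x) * a\<^sup>2 / 2 * moment1 \<epsilon> - 2 * Cx * a * moment2 \<epsilon> - 2 * \<omega> a * tail_moment"
proof (cases "a \<le> A_eps s \<phi> x \<eta> (g x) Cx \<epsilon>")
  case True
  note M = moment_bounds[OF eps]
  have "Cx * a * moment2 \<epsilon> \<le> Cx * A_eps s \<phi> x \<eta> (g x) Cx \<epsilon> * moment2 \<epsilon>"
    using True Cx_nonneg M(2) by (intro mult_right_mono mult_left_mono) auto
  moreover have "\<omega> a * tail_moment \<le> \<omega> (A_eps s \<phi> x \<eta> (g x) Cx \<epsilon>) * tail_moment"
    using omega_phi_mono[OF bounded_phi a(1) True] M(3) by (rule mult_right_mono)
  moreover have "0 \<le> Cx * A_eps s \<phi> x \<eta> (g x) Cx \<epsilon> * moment2 \<epsilon>"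
    using Cx_nonneg A_eps_nonneg[OF eps] M(2) by simp
  moreover have "0 \<le> norm (g x) * a\<^sup>2 / 2 * moment1 \<epsilon>" using M(1) by simp
  ultimately show ?thesis unfolding B_eps_eq by linarith
next
  case False
  then show ?thesis
    using gt_A_eps_imp[OF eps _ a(2)] B_eps_nonneg[OF eps] by (simp add: field_simps)
qed

definition p_dir :: 'a where "p_dir = g x /\<^sub>R norm (g x)"

lemma norm_p_dir: "norm p_dir = 1"
  using grad_nonzero by (simp add: p_dir_def)

lemma inner_grad_diff_p_dir:
  assumes "norm y = 1"
  shows "g x \<bullet> (p_dir - y) = norm (g x) * (norm (p_dir - y))\<^sup>2 / 2"
proof -
  have uu: "p_dir \<bullet> p_dir = 1" "y \<bullet> y = 1" using norm_p_dir assms by (simp_all add: norm_eq_1)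
  have "(norm (p_dir - y))\<^sup>2 = 2 - 2 * (p_dir \<bullet> y)"
    by (simp add: power2_norm_eq_inner inner_diff_left inner_diff_right uu inner_commute)
  moreover have "g x = norm (g x) *\<^sub>R p_dir" using grad_nonzero by (simp add: p_dir_def)
  then have "g x \<bullet> (p_dir - y) = norm (g x) * (1 - p_dir \<bullet> y)"
    by (metis inner_diff_right inner_scaleR_left uu(1) right_diff_distrib mult.right_neutral)
  ultimately show ?thesis by simp
qed

lemma inner_grad_diff_p_dir_pos:
  assumes "norm y = 1" "y \<noteq> p_dir"
  shows "0 < g x \<bullet> (p_dir - y)"
proof -
  have "0 < norm (p_dir - y)" using assms(2) by simp
  then show ?thesis unfolding inner_grad_diff_p_dir[OF assms(1)] using grad_nonzero by simp
qed

lemma ray_int_diff_ge_neg_B_eps: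
  assumes dim: "DIM('a) \<ge> 2" and v: "norm v = 1" and w: "norm w = 1" and eps: "0 < \<epsilon>" "\<epsilon> < \<eta>"
    and ip: "g x \<bullet> (v - w) = norm (g x) * (norm (v - w))\<^sup>2 / 2"
  shows "- B_eps \<epsilon> \<le> ray_int \<epsilon> v - ray_int \<epsilon> w"
proof -
  have "norm (v - w) \<le> 2" using norm_triangle_ineq4[of v w] v w by simp
  with drift_dominates_error[OF eps norm_ge_zero] ray_int_diff_ge[OF dim v w eps] show ?thesis
    unfolding ip by fastforce
qed

lemma full_int_eqI:
  assumes "((\<lambda>d. ereal (trunc_int s \<phi> x y y' d)) \<longlongrightarrow> L) (at_right 0)"
  shows "full_int s \<phi> x y y' = L"
  unfolding full_int_def using assms by (intro tendsto_Lim) (simp_all add: trivial_limit_at_right_real)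

lemma trunc_int_diff_eventually:
  "eventually (\<lambda>d. trunc_int s \<phi> x y1 y1' d - trunc_int s \<phi> x y2 y2' d
      = (ray_int d y1 - ray_int d y2) + (ray_int d (-y1') - ray_int d (-y2'))) (at_right 0)"
  using eventually_at_right_less[of "0::real"] by eventually_elim (simp add: trunc_int_eq_ray_int)

lemma full_int_p_dir_left:
  assumes F: "((\<lambda>\<delta>. trunc_int s \<phi> x p_dir p_dir \<delta>) \<longlongrightarrow> F) (at_right 0)"
    and y': "norm y' = 1" "y' \<noteq> p_dir"
  shows "full_int s \<phi> x p_dir y' = \<infinity>"
proof (rule full_int_eqI)
  have "filterlim (\<lambda>d. ray_int d (-y') - ray_int d (-p_dir)) at_top (at_right 0)"
    using ray_int_diff_tendsto_at_top[of "-y'" "-p_dir"] y' norm_p_dir inner_grad_diff_p_dir_pos[OF y']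
    by (simp add: algebra_simps)
  then have "filterlim (\<lambda>d. trunc_int s \<phi> x p_dir p_dir d + (ray_int d (-y') - ray_int d (-p_dir))) at_top (at_right 0)"
    by (rule filterlim_tendsto_add_at_top[OF F])
  moreover have "eventually (\<lambda>d. trunc_int s \<phi> x p_dir p_dir d + (ray_int d (-y') - ray_int d (-p_dir))
      = trunc_int s \<phi> x p_dir y' d) (at_right 0)"
    using trunc_int_diff_eventually[of p_dir y' p_dir p_dir] by eventually_elim simp
  ultimately have "filterlim (\<lambda>d. trunc_int s \<phi> x p_dir y' d) at_top (at_right 0)"
    by (rule filterlim_cong[OF refl refl, THEN iffD1, rotated])
  then show "((\<lambda>d. ereal (trunc_int s \<phi> x p_dir y' d)) \<longlongrightarrow> \<infinity>) (at_right 0)"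
    by (simp add: tendsto_PInfty_eq_at_top)
qed

lemma full_int_p_dir_right:
  assumes F: "((\<lambda>\<delta>. trunc_int s \<phi> x p_dir p_dir \<delta>) \<longlongrightarrow> F) (at_right 0)"
    and y: "norm y = 1" "y \<noteq> p_dir"
  shows "full_int s \<phi> x y p_dir = -\<infinity>"
proof (rule full_int_eqI)
  have "filterlim (\<lambda>d. ray_int d p_dir - ray_int d y) at_top (at_right 0)"
    by (rule ray_int_diff_tendsto_at_top[OF norm_p_dir y(1) inner_grad_diff_p_dir_pos[OF y]])
  then have "filterlim (\<lambda>d. - trunc_int s \<phi> x p_dir p_dir d + (ray_int d p_dir - ray_int d y)) at_top (at_right 0)"
    by (rule filterlim_tendsto_add_at_top[OF tendsto_minus[OF F]])
  moreover have "eventually (\<lambda>d. - trunc_int s \<phi> x p_dir p_dir d + (ray_int d p_dir - ray_int d y)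
      = - trunc_int s \<phi> x y p_dir d) (at_right 0)"
    using trunc_int_diff_eventually[of p_dir p_dir y p_dir] by eventually_elim simp
  ultimately have "filterlim (\<lambda>d. - trunc_int s \<phi> x y p_dir d) at_top (at_right 0)"
    by (rule filterlim_cong[OF refl refl, THEN iffD1, rotated])
  then show "((\<lambda>d. ereal (trunc_int s \<phi> x y p_dir d)) \<longlongrightarrow> - \<infinity>) (at_right 0)"
    using ereal_tendsto_simps2(3)[of "\<lambda>d. trunc_int s \<phi> x y p_dir d"]
    by (simp add: o_def filterlim_uminus_at_bot)
qed

lemma Lfull_eq:
  assumes F: "((\<lambda>\<delta>. trunc_int s \<phi> x p_dir p_dir \<delta>) \<longlongrightarrow> F) (at_right 0)"
  shows "Lfull s \<phi> x = ereal F"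
proof -
  have uu: "full_int s \<phi> x p_dir p_dir = ereal F"
    using F by (intro full_int_eqI) (simp add: tendsto_ereal)
  have "ereal F \<le> Lfull s \<phi> x" "Lfull s \<phi> x \<le> ereal F"
    unfolding Lfull_def
    using minimax_bounds[of p_dir "sphere 0 1" "ereal F" "full_int s \<phi> x" "ereal F"]
      norm_p_dir uu full_int_p_dir_left[OF F] full_int_p_dir_right[OF F]
    by (fastforce simp: mem_sphere_0)+
  then show ?thesis by (rule antisym[rotated])
qed

lemma Leps_eq_trunc_int_DIM_1:
  assumes "DIM('a) = 1" "0 < \<epsilon>"
  shows "Leps s \<epsilon> \<phi> x = ereal (trunc_int s \<phi> x p_dir p_dir \<epsilon>)"
proof -
  have sph: "sphere (0::'a) 1 = {p_dir, -p_dir}" by (rule sphere_0_1_DIM_1[OF assms(1) norm_p_dir])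
  have I: "(INF y\<in>{p_dir, -p_dir}. ereal (f y)) = ereal (min (f p_dir) (f (-p_dir)))" for f :: "'a \<Rightarrow> real"
    by (simp add: inf_min)
  have S: "(SUP y\<in>{p_dir, -p_dir}. ereal (f y)) = ereal (max (f p_dir) (f (-p_dir)))" for f :: "'a \<Rightarrow> real"
    by (simp add: sup_max bot_ereal_def)
  show ?thesis
    unfolding Leps_def trunc_int_eq_ray_int[OF assms(2)] sph I S
    by (cases "ray_int \<epsilon> p_dir \<le> ray_int \<epsilon> (-p_dir)") (simp_all add: min_def max_def)
qed

lemma Leps_near_trunc_int:
  assumes eps: "0 < \<epsilon>" "\<epsilon> < \<eta>"
  shows "\<exists>L. Leps s \<epsilon> \<phi> x = ereal L \<and> \<bar>L - trunc_int s \<phi> x p_dir p_dir \<epsilon>\<bar> \<le> B_eps \<epsilon>"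
proof (cases "DIM('a) \<ge> 2")
  case True
  let ?T = "trunc_int s \<phi> x p_dir p_dir \<epsilon>"
  have lo: "ereal (?T - B_eps \<epsilon>) \<le> ereal (trunc_int s \<phi> x p_dir y' \<epsilon>)" if "y' \<in> sphere 0 1" for y'
  proof -
    have y': "norm y' = 1" using that by simp
    have "g x \<bullet> (- y' - - p_dir) = norm (g x) * (norm (- y' - - p_dir))\<^sup>2 / 2"
      using inner_grad_diff_p_dir[OF y'] by (simp add: norm_minus_commute)
    from ray_int_diff_ge_neg_B_eps[OF True _ _ eps this] y' norm_p_dir
    show ?thesis by (simp add: trunc_int_eq_ray_int[OF eps(1)])
  qed
  have hi: "ereal (trunc_int s \<phi> x y p_dir \<epsilon>) \<le> ereal (?T + B_eps \<epsilon>)" if "y \<in> sphere 0 1" for y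
    using ray_int_diff_ge_neg_B_eps[OF True norm_p_dir _ eps inner_grad_diff_p_dir, of y] that
    by (simp add: trunc_int_eq_ray_int[OF eps(1)])
  have "ereal (?T - B_eps \<epsilon>) \<le> Leps s \<epsilon> \<phi> x" "Leps s \<epsilon> \<phi> x \<le> ereal (?T + B_eps \<epsilon>)"
    unfolding Leps_def
    using minimax_bounds[where f="\<lambda>y y'. ereal (trunc_int s \<phi> x y y' \<epsilon>)" and S="sphere 0 1", OF _ lo hi]
      norm_p_dir by auto
  then show ?thesis by (cases "Leps s \<epsilon> \<phi> x") (auto simp: abs_le_iff)
next
  case False
  then have "DIM('a) = 1" using DIM_positive[where 'a='a] by linarith
  then show ?thesis using Leps_eq_trunc_int_DIM_1 B_eps_nonneg[OF eps] eps(1) by simp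
qed

end

theorem corollary3p2:
  fixes \<phi> :: "'a::euclidean_space \<Rightarrow> real"
    and x :: 'a and \<eta> s eps :: real
    and g :: "'a \<Rightarrow> 'a" and H :: "'a \<Rightarrow> 'a \<Rightarrow>\<^sub>L 'a"
  assumes s: "1/2 < s" "s < 1"
    and eta: "0 < \<eta>"
    and bdd: "bounded (range \<phi>)"
    and borel: "\<phi> \<in> borel_measurable borel"
    and grad: "\<And>z. z \<in> cball x \<eta> \<Longrightarrow> (\<phi> has_derivative (\<lambda>h. g z \<bullet> h)) (at z within cball x \<eta>)"
    and hess: "\<And>z. z \<in> cball x \<eta> \<Longrightarrow> (g has_derivative blinfun_apply (H z)) (at z within cball x \<eta>)"
    and hess_cont: "continuous_on (cball x \<eta>) H"
    and unif: "uniformly_continuous_on (- cball x \<eta>) \<phi>"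
    and p_nz: "g x \<noteq> 0"
    and eps: "0 < eps" "eps < \<eta>"
  shows "\<bar>Leps s eps \<phi> x - Lfull s \<phi> x\<bar> \<le>
    ereal (
      (let Cx = (1/2) * (SUP z\<in>ball x \<eta>. norm (H z));
           A = A_eps s \<phi> x \<eta> (g x) Cx eps
       in 4 * cs s * s * Cx * (\<eta> powr (2 - 2 * s) - eps powr (2 - 2 * s)) * A
          + cs s * (1 - s) * (\<eta> powr (-2 * s) + (2 * s / (2 * s - 1)) * \<eta> powr (1 - 2 * s))
              * omega_phi \<phi> x \<eta> A
          + cs s * s * Cx * eps powr (2 - 2 * s)))"
proof -
  interpret fractional_setting \<phi> x \<eta> g H s
    using s eta bdd borel grad hess hess_cont p_nz by unfold_locales auto
  obtain F where F: "((\<lambda>\<delta>. trunc_int s \<phi> x p_dir p_dir \<delta>) \<longlongrightarrow> F) (at_right 0)"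
    and F_near: "\<bar>F - trunc_int s \<phi> x p_dir p_dir eps\<bar> \<le> cs s * s * Cx * eps powr (2 - 2 * s)"
    using trunc_int_symmetric_converges[OF norm_p_dir eps(1) less_imp_le[OF eps(2)]] by blast
  obtain L where L: "Leps s eps \<phi> x = ereal L"
    and L_near: "\<bar>L - trunc_int s \<phi> x p_dir p_dir eps\<bar> \<le> B_eps eps"
    using Leps_near_trunc_int[OF eps] by blast
  have "\<bar>L - F\<bar> \<le> B_eps eps + cs s * s * Cx * eps powr (2 - 2 * s)"
    using F_near L_near by linarith
  then show ?thesis
    unfolding L Lfull_eq[OF F] Let_def Cx_def[symmetric] B_eps_def by simp
qed

end
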